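(* Let $f,g\in Lie_{\mathbf{k}[Y]}(X)$ be $\mathbf{k}$-monic with $\bar f^Y=1$ and $g=rx$ where $r\in\mathbf{k}[Y]$ and $x\in X$. Then every inclusion composition of $f$ and $g$ is trivial modulo $(\{f\}\cup rX, w)$ for the corresponding $w$, where $rX=\{rx': x'\in X\}$.
   Context: Let $\mathbf{k}$ be a field and $X$, $Y$ well-ordered sets. $X^*$ is the free monoid on $X$. Lex ordering $>$ on $X^*$: $1>t$ for every $t\neq1$, and for $u=xu'$, $v=x'v'$ ($x,x'\in X$), $u>v$ iff $x>x'$, or $x=x'$ and $u'>v'$. Deg-lex $\succ_X$: longer words are bigger, equal lengths compared by lex. $w\ne1$ is an ALSW if $w>vu$ for all factorizations $w=uv$, $u,v\neq1$; $ALSW(X)$ is their set. Every $c\in X^*$ factors uniquely as $c=c_1\cdots c_n$, $c_i\in ALSW(X)$, $c_1\le\cdots\le c_n$. Each $w\in ALSW(X)$ has a standard bracketing $[w]$: $[w]=w$ if $|w|=1$, else $[w]=[[u],[v]]$ with $v$ the longest proper ALSW suffix of $w$. $[Y]$ is the free commutative monoid on $Y$ with deg-lex order $\succ_Y$; $\mathbf{k}[Y]\langle X\rangle$ is the free associative $\mathbf{k}[Y]$-algebra on $X$ with $\mathbf{k}$-basis $[Y]X^*=\{u^Yu^X\}$; $Lie_{\mathbf{k}[Y]}(X)$ is its $\mathbf{k}[Y]$-Lie subalgebra generated by $X$ under $[p,q]=pq-qp$. Order $[Y]X^*$ by $u\succ v$ iff $u^X\succ_Xv^X$, or $u^X=v^X$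 and $u^Y\succ_Y v^Y$. For nonzero $p$, $\bar p=\bar p^Y\bar p^X$ is the $\succ$-largest element of $[Y]X^*$ occurring in $p$; $p$ is $\mathbf{k}$-monic if its coefficient is $1$. Special bracketing: if $u\in ALSW(X)$, $a,b\in X^*$, $aub\in ALSW(X)$, then $[aub]=[a[uc]d]$ with $b=cd$ and $[uc]$ the standard bracketing of $uc$ occurring as a sub-bracket; with $c=c_1\cdots c_n$ the nondecreasing ALSW factorization, $[aub]_u$ is obtained by replacing $[uc]$ with $[\cdots[[u,[c_1]],[c_2]],\dots,[c_n]]$. For $\mathbf{k}$-monic $s$ and $a,b$ with $a\bar s^Xb\in ALSW(X)$, the normal $s$-word $[asb]_{\bar s}$ is obtained from $[a\bar s^Xb]_{\bar s^X}$ by replacing the sub-bracket $[\bar s^X]$ by $s$. Inclusion composition of $\mathbf{k}$-monic $f,g$: with $L=\mathrm{lcm}(\bar f^Y,\bar g^Y)$ in $[Y]$, if $\bar f^X=a\bar g^Xb$ for $a,b\in X^*$, then $C_1\langle f,g\rangle_w=\frac{L}{\bar f^Y}f-\frac{L}{\bar g^Y}[agb]_{\bar g}$ with $w=L\bar f^X$. For a $\mathbf{k}$-monic set $S$ and $w\in[Y]X^*$, $h$ is trivial modulo $(S,w)$ if $h=\sum_i\alpha_i\beta_i[a_is_ib_i]_{\bar s_i}$ with $\alpha_i\in\mathbf{k}$, $\beta_i\in[Y]$, $s_i\in S$, $\beta_i\bar s_i^Ya_i\bar s_i^Xb_i\prec w$. *)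

theory Defs
  imports Main "HOL-Library.Multiset" "HOL-Library.Poly_Mapping"
begin

text \<open>Lex order on X*: the empty word is the largest; otherwise compare first letters.\<close>
fun lexgt :: "'a::linorder list \<Rightarrow> 'a list \<Rightarrow> bool" where
  "lexgt [] v = (v \<noteq> [])"
| "lexgt (x # u) [] = False"
| "lexgt (x # u) (y # v) = (y < x \<or> (x = y \<and> lexgt u v))"

definition deglex_gt :: "'a::linorder list \<Rightarrow> 'a list \<Rightarrow> bool" where
  "deglex_gt u v \<longleftrightarrow> length v < length u \<or> (length u = length v \<and> lexgt u v)"

definition alsw :: "'a::linorder list \<Rightarrow> bool" where
  "alsw w \<longleftrightarrow> w \<noteq> [] \<and> (\<forall>u v. w = u @ v \<and> u \<noteq> [] \<and> v \<noteq> [] \<longrightarrow> lexgt w (v @ u))"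

definition alsw_fact :: "'a::linorder list \<Rightarrow> 'a list list" where
  "alsw_fact c = (THE cs. concat cs = c \<and> (\<forall>ci\<in>set cs. alsw ci)
      \<and> sorted_wrt (\<lambda>p q. p = q \<or> lexgt q p) cs)"

definition deglexY_gt :: "'a::linorder multiset \<Rightarrow> 'a multiset \<Rightarrow> bool" where
  "deglexY_gt m n \<longleftrightarrow> size n < size m \<or>
     (size m = size n \<and> lexgt (rev (sorted_list_of_multiset m)) (rev (sorted_list_of_multiset n)))"

type_synonym ('y, 'x, 'k) kpol = "('y multiset \<times> 'x list) \<Rightarrow>\<^sub>0 'k"

definition mon_gt :: "'y::linorder multiset \<times> 'x::linorder list \<Rightarrow> 'y multiset \<times> 'x list \<Rightarrow> bool" where
  "mon_gt m n \<longleftrightarrow> deglex_gt (snd m) (snd n) \<or> (snd m = snd n \<and> deglexY_gt (fst m) (fst n))"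

definition wmult :: "('y, 'x, 'k::field) kpol \<Rightarrow> ('y, 'x, 'k) kpol \<Rightarrow> ('y, 'x, 'k) kpol" where
  "wmult p q = (\<Sum>m\<in>Poly_Mapping.keys p. \<Sum>n\<in>Poly_Mapping.keys q.
      Poly_Mapping.single (fst m + fst n, snd m @ snd n) (Poly_Mapping.lookup p m * Poly_Mapping.lookup q n))"

definition lie :: "('y, 'x, 'k::field) kpol \<Rightarrow> ('y, 'x, 'k) kpol \<Rightarrow> ('y, 'x, 'k) kpol" where
  "lie p q = wmult p q - wmult q p"

definition var :: "'x \<Rightarrow> ('y, 'x, 'k::field) kpol" where
  "var x = Poly_Mapping.single ({#}, [x]) 1"

definition ymon :: "'y multiset \<Rightarrow> 'k \<Rightarrow> ('y, 'x, 'k::field) kpol" where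
  "ymon \<beta> \<alpha> = Poly_Mapping.single (\<beta>, []) \<alpha>"

definition kY :: "('y, 'x, 'k::field) kpol set" where
  "kY = {r. \<forall>m\<in>Poly_Mapping.keys r. snd m = []}"

inductive_set lie_alg :: "('y, 'x, 'k::field) kpol set" where
  gen: "var x \<in> lie_alg"
| add: "p \<in> lie_alg \<Longrightarrow> q \<in> lie_alg \<Longrightarrow> p + q \<in> lie_alg"
| smul: "r \<in> kY \<Longrightarrow> p \<in> lie_alg \<Longrightarrow> wmult r p \<in> lie_alg"
| br: "p \<in> lie_alg \<Longrightarrow> q \<in> lie_alg \<Longrightarrow> lie p q \<in> lie_alg"

definition lead :: "('y::linorder, 'x::linorder, 'k::field) kpol \<Rightarrow> 'y multiset \<times> 'x list" where
  "lead p = (THE m. m \<in> Poly_Mapping.keys p \<and> (\<forall>n\<in>Poly_Mapping.keys p. n \<noteq> m \<longrightarrow> mon_gt m n))"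

definition ly :: "('y::linorder, 'x::linorder, 'k::field) kpol \<Rightarrow> 'y multiset" where
  "ly p = fst (lead p)"

definition lx :: "('y::linorder, 'x::linorder, 'k::field) kpol \<Rightarrow> 'x list" where
  "lx p = snd (lead p)"

definition kmonic :: "('y::linorder, 'x::linorder, 'k::field) kpol \<Rightarrow> bool" where
  "kmonic p \<longleftrightarrow> p \<noteq> 0 \<and> Poly_Mapping.lookup p (lead p) = 1"

text \<open>Nonassociative bracket trees over X, with a hole constructor H.\<close>
datatype 'x btree = L 'x | H | B "'x btree" "'x btree"

fun leaves :: "'x btree \<Rightarrow> 'x list" where
  "leaves (L x) = [x]" | "leaves H = []" | "leaves (B l r) = leaves l @ leaves r"

fun holes :: "'x btree \<Rightarrow> nat" where
  "holes (L x) = 0" | "holes H = 1" | "holes (B l r) = holes l + holes r"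

text \<open>Letters occurring before the (unique) hole of a context.\<close>
fun pre :: "'x btree \<Rightarrow> 'x list" where
  "pre (L x) = [x]" | "pre H = []"
| "pre (B l r) = (if 0 < holes l then pre l else leaves l @ pre r)"

fun fill :: "'x btree \<Rightarrow> 'x btree \<Rightarrow> 'x btree" where
  "fill (L x) t = L x" | "fill H t = t" | "fill (B l r) t = B (fill l t) (fill r t)"

fun evalb :: "('y, 'x, 'k::field) kpol \<Rightarrow> 'x btree \<Rightarrow> ('y, 'x, 'k) kpol" where
  "evalb h (L x) = var x" | "evalb h H = h"
| "evalb h (B l r) = lie (evalb h l) (evalb h r)"

definition suf_start :: "'x::linorder list \<Rightarrow> nat" where
  "suf_start w = (LEAST k. 0 < k \<and> k < length w \<and> alsw (drop k w))"

function std :: "'x::linorder list \<Rightarrow> 'x btree" where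
  "std w = (let k = suf_start w in
     if 2 \<le> length w \<and> 0 < k \<and> k < length w
     then B (std (take k w)) (std (drop k w))
     else L (hd w))"
  by pat_completeness auto
termination
  by (relation "measure length") auto

text \<open>For aub ALSW with u ALSW: [aub] = [a[uc]d], b = cd, with [uc] the standard
  bracketing of uc occurring as a sub-bracket (we take the shortest such c).\<close>
definition spec_ok :: "'x::linorder list \<Rightarrow> 'x list \<Rightarrow> 'x list \<Rightarrow> 'x list \<Rightarrow> 'x btree \<Rightarrow> bool" where
  "spec_ok a u b c C \<longleftrightarrow> (\<exists>d. b = c @ d) \<and> holes C = 1 \<and> pre C = a
      \<and> std (a @ u @ b) = fill C (std (u @ c))"

definition spec_c :: "'x::linorder list \<Rightarrow> 'x list \<Rightarrow> 'x list \<Rightarrow> 'x list" where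
  "spec_c a u b = (SOME c. (\<exists>C. spec_ok a u b c C) \<and>
      (\<forall>c'. (\<exists>C. spec_ok a u b c' C) \<longrightarrow> length c \<le> length c'))"

definition spec_ctx :: "'x::linorder list \<Rightarrow> 'x list \<Rightarrow> 'x list \<Rightarrow> 'x btree" where
  "spec_ctx a u b = (SOME C. spec_ok a u b (spec_c a u b) C)"

text \<open>[aub]_u with the sub-bracket [u] replaced by the hole H:
  [uc] is replaced by [...[[u],[c1]],...,[cn]].\<close>
definition special_tree :: "'x::linorder list \<Rightarrow> 'x list \<Rightarrow> 'x list \<Rightarrow> 'x btree" where
  "special_tree a u b = fill (spec_ctx a u b)
      (foldl B H (map std (alsw_fact (spec_c a u b))))"

definition special_bracketing :: "'x::linorder list \<Rightarrow> 'x list \<Rightarrow> 'x list \<Rightarrow> 'x btree" where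
  "special_bracketing a u b = fill (special_tree a u b) (std u)"

definition nsw :: "'x::linorder list \<Rightarrow> ('y::linorder, 'x, 'k::field) kpol \<Rightarrow> 'x list \<Rightarrow> ('y, 'x, 'k) kpol" where
  "nsw a s b = evalb s (special_tree a (lx s) b)"

text \<open>C1<f,g>_w for \<bar>f^X = a \<bar>g^X b; L = lcm(\<bar>f^Y, \<bar>g^Y) is the multiset union (max).\<close>
definition incl_comp :: "('y::linorder, 'x::linorder, 'k::field) kpol \<Rightarrow> ('y, 'x, 'k) kpol
     \<Rightarrow> 'x list \<Rightarrow> 'x list \<Rightarrow> ('y, 'x, 'k) kpol" where
  "incl_comp f g a b = (let L = ly f \<union># ly g in
      wmult (ymon (L - ly f) 1) f - wmult (ymon (L - ly g) 1) (nsw a g b))"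

definition incl_w :: "('y::linorder, 'x::linorder, 'k::field) kpol \<Rightarrow> ('y, 'x, 'k) kpol
     \<Rightarrow> 'y multiset \<times> 'x list" where
  "incl_w f g = (ly f \<union># ly g, lx f)"

text \<open>h is trivial modulo (S,w): h = \<Sum> \<alpha>_i \<beta>_i [a_i s_i b_i]_{\<bar>s_i} with
  \<beta>_i \<bar>s_i^Y a_i \<bar>s_i^X b_i \<prec> w (and a_i \<bar>s_i^X b_i ALSW, so that the normal s-word is defined).\<close>
definition trivial_mod :: "('y::linorder, 'x::linorder, 'k::field) kpol set \<Rightarrow> 'y multiset \<times> 'x list
     \<Rightarrow> ('y, 'x, 'k) kpol \<Rightarrow> bool" where
  "trivial_mod S w h \<longleftrightarrow> (\<exists>ts :: ('k \<times> 'y multiset \<times> 'x list \<times> ('y, 'x, 'k) kpol \<times> 'x list) list.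
      h = sum_list (map (\<lambda>(\<alpha>, \<beta>, a, s, b). wmult (ymon \<beta> \<alpha>) (nsw a s b)) ts)
    \<and> (\<forall>(\<alpha>, \<beta>, a, s, b) \<in> set ts. s \<in> S \<and> alsw (a @ lx s @ b)
          \<and> mon_gt w (\<beta> + ly s, a @ lx s @ b)))"

end

theory Submission
  imports Defs
begin

text \<open>
  Standard Lie polynomials \<open>[z]\<close> of ALSW words span the free Lie algebra over \<open>k[Y]\<close>
  (rewrite a bracket of two of them by the Jacobi identity until it is a standard pair), so
  \<open>f = \<Sum> c\<^sub>z [z]\<close> with \<open>c\<^sub>z \<in> k[Y]\<close>. Each \<open>[z]\<close> is \<open>z\<close> plus lexicographically smaller words of the
  same length, hence the deg-lex greatest \<open>m\<close> among the \<open>z\<close> is \<open>\<bar>f\<^sup>X\<close>, and \<open>\<bar>f\<^sup>Y = 1\<close>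
  forces \<open>c\<^sub>m = 1\<close>. As \<open>m = a x b\<close>, the normal word \<open>[a g b]\<^sub>\<bar>g\<close> of \<open>g = r x\<close> is \<open>r [m]\<close>, and the
  composition becomes \<open>(\<bar>g\<^sup>Y - r) f + r \<Sum>\<^bsub>z \<noteq> m\<^esub> c\<^sub>z [z]\<close>. The first summand only involves
  \<open>Y\<close>-monomials below \<open>\<bar>g\<^sup>Y\<close> times \<open>f\<close>; in the second, \<open>r [x' z']\<close> is the normal \<open>rx'\<close>-word
  \<open>[(rx') z']\<close> of the word \<open>x' z' \<prec> m\<close>.
\<close>

declare std.simps [simp del]

abbreviation (input) lookup where "lookup \<equiv> Poly_Mapping.lookup"
abbreviation (input) keys where "keys \<equiv> Poly_Mapping.keys"
abbreviation (input) single where "single \<equiv> Poly_Mapping.single"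

lemma finite_has_greatest_wrt:
  assumes "finite S" "S \<noteq> {}"
    and "\<And>a b c. a \<in> S \<Longrightarrow> b \<in> S \<Longrightarrow> c \<in> S \<Longrightarrow> R a b \<Longrightarrow> R b c \<Longrightarrow> R a c"
    and "\<And>a b. a \<in> S \<Longrightarrow> b \<in> S \<Longrightarrow> a \<noteq> b \<Longrightarrow> R a b \<or> R b a"
  shows "\<exists>m\<in>S. \<forall>n\<in>S. n \<noteq> m \<longrightarrow> R m n"
  using assms
proof (induction S rule: finite_ne_induct)
  case (insert x F)
  have "\<exists>m\<in>F. \<forall>n\<in>F. n \<noteq> m \<longrightarrow> R m n"
    by (rule insert.IH) (use insert.prems in blast)+
  then obtain m where m: "m \<in> F" "\<forall>n\<in>F. n \<noteq> m \<longrightarrow> R m n" by blast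
  show ?case
  proof (cases "R x m")
    case True
    have "R x n" if "n \<in> F" "n \<noteq> m" for n
      using insert.prems(1)[of x m n] True m that by blast
    then have "\<forall>n\<in>insert x F. n \<noteq> x \<longrightarrow> R x n" using True by blast
    then show ?thesis by blast
  next
    case False
    then have "R m x" using insert.prems(2)[of x m] insert.hyps m(1) by blast
    then show ?thesis using m by (intro bexI[of _ m]) auto
  qed
qed simp

lemma lexgt_irrefl: "\<not> lexgt u u"
  by (induction u) auto

lemma lexgt_Nil_right: "\<not> lexgt u []"
  by (cases u) auto

lemma lexgt_trans: "lexgt u v \<Longrightarrow> lexgt v w \<Longrightarrow> lexgt u w"
proof (induction u arbitrary: v w)
  case Nil
  then show ?case by (cases w) (auto simp: lexgt_Nil_right)
next
  case (Cons x u)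
  then show ?case by (cases v; cases w) (auto simp: lexgt_Nil_right)
qed

lemma lexgt_asym: "lexgt u v \<Longrightarrow> \<not> lexgt v u"
  using lexgt_trans lexgt_irrefl by blast

lemma lexgt_total: "u \<noteq> v \<Longrightarrow> lexgt u v \<or> lexgt v u"
proof (induction u arbitrary: v)
  case (Cons x u)
  then show ?case by (cases v) (auto simp: neq_iff)
qed auto

lemma lexgt_append_left [simp]: "lexgt (p @ u) (p @ v) \<longleftrightarrow> lexgt u v"
  by (induction p) auto

lemma lexgt_append_nonempty: "s \<noteq> [] \<Longrightarrow> lexgt u (u @ s)"
  by (induction u) auto

lemma lexgt_append_not_prefix:
  "lexgt u v \<Longrightarrow> \<nexists>s. v = u @ s \<Longrightarrow> lexgt (u @ s) (v @ t)"
proof (induction u arbitrary: v)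
  case (Cons x u)
  then show ?case by (cases v) auto
qed auto

lemma lexgt_append_same_length:
  "length u = length v \<Longrightarrow> lexgt u v \<Longrightarrow> lexgt (u @ s) (v @ t)"
  by (rule lexgt_append_not_prefix) (auto simp: lexgt_irrefl)

lemma lexgt_append_longer:
  "length v < length u \<Longrightarrow> lexgt u v \<Longrightarrow> lexgt (u @ s) (v @ t)"
  by (rule lexgt_append_not_prefix) auto

lemma lexgt_append_self_right:
  assumes "x \<noteq> []" and "x = v \<or> lexgt v x"
  shows "lexgt v (x @ v)"
proof (cases "\<exists>t. x = v @ t")
  case True
  then obtain t where "x = v @ t" by blast
  then show ?thesis using assms lexgt_append_nonempty[of "t @ v" v] by auto
next
  case False
  then have "lexgt (v @ []) (x @ v)" using assms lexgt_append_not_prefix by blast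
  then show ?thesis by simp
qed

section \<open>Associative Lyndon--Shirshov words\<close>

lemma alsw_singleton: "alsw [x]"
  unfolding alsw_def by (auto simp: Cons_eq_append_conv)

lemma alsw_iff_suffixes:
  "alsw w \<longleftrightarrow> w \<noteq> [] \<and> (\<forall>j. 0 < j \<longrightarrow> j < length w \<longrightarrow> lexgt w (drop j w))"
proof
  assume A: "alsw w"
  show "w \<noteq> [] \<and> (\<forall>j. 0 < j \<longrightarrow> j < length w \<longrightarrow> lexgt w (drop j w))"
  proof (intro conjI allI impI)
    show "w \<noteq> []" using A alsw_def by blast
    fix j assume j: "0 < j" "j < length w"
    define p s where "p = take j w" and "s = drop j w"
    have w: "w = p @ s" and ne: "p \<noteq> []" "s \<noteq> []" using j by (auto simp: p_def s_def)
    have rot: "lexgt w (s @ p)" using A ne w unfolding alsw_def by blast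
    show "lexgt w s"
    proof (rule ccontr)
      assume "\<not> lexgt w s"
      moreover have "w \<noteq> s" using ne w by auto
      ultimately have ls: "lexgt s w" using lexgt_total by blast
      show False
      proof (cases "\<exists>t. w = s @ t")
        case True
        then obtain t where t: "w = s @ t" by blast
        have lt: "length t = length p" using t w by (metis add.commute length_append add_left_cancel)
        have "t \<noteq> []" using t w ne by auto
        then have "lexgt w (t @ s)" using A t ne unfolding alsw_def by blast
        moreover have "lexgt t p" using rot t by simp
        ultimately show False
          using w lt lexgt_append_same_length[of t p s s] lexgt_asym by auto
      next
        case False
        then have "lexgt (s @ p) (w @ [])" using ls lexgt_append_not_prefix by blast
        then show False using rot lexgt_asym[of w "s @ p"] by simp
      qed
    qed
  qed
next
  assume B: "w \<noteq> [] \<and> (\<forall>j. 0 < j \<longrightarrow> j < length w \<longrightarrow> lexgt w (drop j w))"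
  show "alsw w" unfolding alsw_def
  proof (intro conjI allI impI)
    show "w \<noteq> []" using B by blast
    fix u v assume uv: "w = u @ v \<and> u \<noteq> [] \<and> v \<noteq> []"
    then have "lexgt w v" using B[THEN conjunct2, rule_format, of "length u"] by simp
    then have "lexgt (w @ []) (v @ u)"
      by (intro lexgt_append_longer) (use uv in auto)
    then show "lexgt w (v @ u)" by simp
  qed
qed

lemma alsw_lexgt_drop: "alsw w \<Longrightarrow> 0 < j \<Longrightarrow> j < length w \<Longrightarrow> lexgt w (drop j w)"
  unfolding alsw_iff_suffixes by blast

lemma alsw_append:
  assumes u: "alsw u" and v: "alsw v" and uv: "lexgt u v"
  shows "alsw (u @ v)" and "lexgt (u @ v) v"
proof -
  have une: "u \<noteq> []" and vne: "v \<noteq> []" using u v alsw_def by auto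
  show g: "lexgt (u @ v) v"
  proof (cases "\<exists>t. v = u @ t")
    case True
    then obtain t where t: "v = u @ t" by blast
    then have "t \<noteq> []" using uv lexgt_irrefl[of u] by auto
    then have "lexgt v (drop (length u) v)" using v une t by (intro alsw_lexgt_drop) auto
    then show ?thesis using t by simp
  next
    case False
    then have "lexgt (u @ v) (v @ [])" using uv lexgt_append_not_prefix by blast
    then show ?thesis by simp
  qed
  show "alsw (u @ v)" unfolding alsw_iff_suffixes
  proof (intro conjI allI impI)
    show "u @ v \<noteq> []" using une by simp
    fix j assume j: "0 < j" "j < length (u @ v)"
    consider "j < length u" | "j = length u" | "length u < j" by linarith
    then show "lexgt (u @ v) (drop j (u @ v))"
    proof cases
      case 1
      have "lexgt u (drop j u)" using u j 1 by (intro alsw_lexgt_drop)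
      then have "lexgt (u @ v) (drop j u @ v)"
        by (rule lexgt_append_longer[rotated]) (use 1 j in auto)
      then show ?thesis using 1 by simp
    next
      case 2
      then show ?thesis using g by simp
    next
      case 3
      have "lexgt v (drop (j - length u) v)" using v j 3 by (intro alsw_lexgt_drop) auto
      then show ?thesis using 3 g lexgt_trans[of "u @ v" v] by simp
    qed
  qed
qed

definition greatest_suffix :: "'x::linorder list \<Rightarrow> nat \<Rightarrow> bool" where
  "greatest_suffix w k \<longleftrightarrow> 0 < k \<and> k < length w \<and>
     (\<forall>j. 0 < j \<longrightarrow> j < length w \<longrightarrow> j \<noteq> k \<longrightarrow> lexgt (drop k w) (drop j w))"

lemma greatest_suffix_exists: "2 \<le> length w \<Longrightarrow> \<exists>k. greatest_suffix w k"
proof -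
  assume "2 \<le> length w"
  then have "\<exists>m\<in>{0<..<length w}. \<forall>n\<in>{0<..<length w}. n \<noteq> m \<longrightarrow> lexgt (drop m w) (drop n w)"
  proof (intro finite_has_greatest_wrt)
    fix a b assume "a \<in> {0<..<length w}" "b \<in> {0<..<length w}" "a \<noteq> b"
    then have "drop a w \<noteq> drop b w" by (metis diff_diff_cancel greaterThanLessThan_iff length_drop less_imp_le)
    then show "lexgt (drop a w) (drop b w) \<or> lexgt (drop b w) (drop a w)"
      using lexgt_total by blast
  next
    have "1 \<in> {0<..<length w}" using \<open>2 \<le> length w\<close> by simp
    then show "{0<..<length w} \<noteq> {}" by blast
  qed (use lexgt_trans in auto)
  then show ?thesis unfolding greatest_suffix_def by auto
qed

lemma alsw_drop_greatest_suffix: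
  assumes "greatest_suffix w k"
  shows "alsw (drop k w)"
  unfolding alsw_iff_suffixes
proof (intro conjI allI impI)
  show "drop k w \<noteq> []" using assms unfolding greatest_suffix_def by auto
  fix j assume "0 < j" "j < length (drop k w)"
  then have "lexgt (drop k w) (drop (j + k) w)" using assms unfolding greatest_suffix_def by auto
  then show "lexgt (drop k w) (drop j (drop k w))" by (simp add: add.commute)
qed

lemma alsw_take_greatest_suffix:
  assumes w: "alsw w" and k: "greatest_suffix w k"
  shows "alsw (take k w)"
  unfolding alsw_iff_suffixes
proof (intro conjI allI impI)
  define u v where "u = take k w" and "v = drop k w"
  have uv: "w = u @ v" and lu: "length u = k" and k0: "0 < k" "k < length w"
    using k by (auto simp: u_def v_def greatest_suffix_def)
  show "take k w \<noteq> []" using k0 by (cases w) auto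
  fix j assume "0 < j" "j < length (take k w)"
  then have j: "0 < j" "j < length u" using u_def by auto
  define u' where "u' = drop j u"
  have "lexgt w (drop j w)" using w j k0 lu by (intro alsw_lexgt_drop) auto
  then have wu: "lexgt (u @ v) (u' @ v)" using j by (simp add: uv u'_def)
  have "length u' < length u" using j by (simp add: u'_def)
  then have "u \<noteq> u'" by auto
  show "lexgt (take k w) (drop j (take k w))"
  proof (rule ccontr)
    assume "\<not> lexgt (take k w) (drop j (take k w))"
    then have l2: "lexgt u' u" using lexgt_total \<open>u \<noteq> u'\<close> by (auto simp: u_def u'_def)
    show False
    proof (cases "\<exists>t. u = u' @ t")
      case True
      then obtain t where t: "u = u' @ t" and "t \<noteq> []" using \<open>u \<noteq> u'\<close> by auto
      have "length u' \<noteq> k" "0 < length u'" "length u' < length w"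
        using t \<open>t \<noteq> []\<close> lu j k0 u'_def by auto
      then have "lexgt (drop k w) (drop (length u') w)"
        using k unfolding greatest_suffix_def by blast
      moreover have "drop k w = v" "drop (length u') w = t @ v" using t uv lu by auto
      ultimately have "lexgt v (t @ v)" by simp
      moreover have "lexgt (t @ v) v" using wu t by simp
      ultimately show False using lexgt_asym by blast
    next
      case False
      then have "lexgt (u' @ v) (u @ v)" using l2 lexgt_append_not_prefix by blast
      then show False using wu lexgt_asym by blast
    qed
  qed
qed

lemma suf_start_eq_greatest_suffix: "greatest_suffix w k \<Longrightarrow> suf_start w = k"
  unfolding suf_start_def
proof (rule Least_equality)
  assume k: "greatest_suffix w k"
  then show "0 < k \<and> k < length w \<and> alsw (drop k w)"
    using alsw_drop_greatest_suffix greatest_suffix_def by blast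
  fix y assume y: "0 < y \<and> y < length w \<and> alsw (drop y w)"
  show "k \<le> y"
  proof (rule ccontr)
    assume "\<not> k \<le> y"
    then have "lexgt (drop y w) (drop (k - y) (drop y w))"
      using y k by (intro alsw_lexgt_drop) (auto simp: greatest_suffix_def)
    moreover have "lexgt (drop k w) (drop y w)" using k y \<open>\<not> k \<le> y\<close> unfolding greatest_suffix_def by auto
    ultimately show False using \<open>\<not> k \<le> y\<close> lexgt_asym[of "drop y w"] by simp
  qed
qed

lemma std_greatest_suffix: "greatest_suffix w k \<Longrightarrow> std w = B (std (take k w)) (std (drop k w))"
proof -
  assume k: "greatest_suffix w k"
  then have "2 \<le> length w" "0 < k" "k < length w" unfolding greatest_suffix_def by auto
  then show ?thesis by (subst std.simps) (simp add: suf_start_eq_greatest_suffix[OF k] Let_def)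
qed

lemma std_singleton: "std [x] = L x"
  by (subst std.simps) (simp add: Let_def)

lemma std_induct [consumes 1, case_names singleton split]:
  assumes "w \<noteq> []"
    and singleton: "\<And>x. P [x]"
    and split: "\<And>w k. greatest_suffix w k \<Longrightarrow> P (take k w) \<Longrightarrow> P (drop k w) \<Longrightarrow> P w"
  shows "P w"
  using assms(1)
proof (induction w rule: length_induct)
  case (1 w)
  show ?case
  proof (cases "2 \<le> length w")
    case True
    then obtain k where k: "greatest_suffix w k" using greatest_suffix_exists by blast
    then have "0 < k" "k < length w" by (auto simp: greatest_suffix_def)
    then have "take k w \<noteq> []" "drop k w \<noteq> []"
      and "length (take k w) < length w" "length (drop k w) < length w" by auto
    then have "P (take k w)" "P (drop k w)" using 1(1) by blast+
    then show ?thesis using k split by blast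
  next
    case False
    then have "length w = Suc 0" using 1(2) by (cases w) (auto simp: Suc_le_eq)
    then obtain x where "w = [x]" by (auto simp: length_Suc_conv)
    then show ?thesis using singleton by simp
  qed
qed

lemma holes_std: "holes (std w) = 0"
proof (cases "w = []")
  case True
  then show ?thesis by (subst std.simps) (simp add: Let_def)
next
  case False
  then show ?thesis by (induction w rule: std_induct) (simp_all add: std_singleton std_greatest_suffix)
qed

lemma leaves_std: "w \<noteq> [] \<Longrightarrow> leaves (std w) = w"
  by (induction w rule: std_induct) (simp_all add: std_singleton std_greatest_suffix)

lemma greatest_suffix_append:
  assumes u: "alsw u" and v: "alsw v"
    and suffixes: "\<forall>j. 0 < j \<longrightarrow> j < length u \<longrightarrow> drop j u = v \<or> lexgt v (drop j u)"
  shows "greatest_suffix (u @ v) (length u)"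
  unfolding greatest_suffix_def
proof (intro conjI allI impI)
  show "0 < length u" "length u < length (u @ v)" using u v alsw_def by auto
  fix j assume j: "0 < j" "j < length (u @ v)" "j \<noteq> length u"
  show "lexgt (drop (length u) (u @ v)) (drop j (u @ v))"
  proof (cases "j < length u")
    case True
    then have "lexgt v (drop j u @ v)"
      using suffixes j by (intro lexgt_append_self_right) auto
    then show ?thesis using True by simp
  next
    case False
    then have "lexgt v (drop (j - length u) v)" using v j by (intro alsw_lexgt_drop) auto
    then show ?thesis using False by simp
  qed
qed

section \<open>The algebra \<open>k[Y]\<langle>X\<rangle>\<close>\<close>

definition mon_mult :: "'y multiset \<times> 'x list \<Rightarrow> 'y multiset \<times> 'x list \<Rightarrow> 'y multiset \<times> 'x list" where
  "mon_mult m n = (fst m + fst n, snd m @ snd n)"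

lemma mon_mult_assoc: "mon_mult (mon_mult a b) c = mon_mult a (mon_mult b c)"
  by (simp add: mon_mult_def add.assoc)

lemma wmult_eq_sum:
  "wmult p q = (\<Sum>m\<in>keys p. \<Sum>n\<in>keys q. single (mon_mult m n) (lookup p m * lookup q n))"
  by (simp add: wmult_def mon_mult_def)

lemma wmult_eq_sum_superset:
  assumes "finite M" "keys p \<subseteq> M" "finite N" "keys q \<subseteq> N"
  shows "wmult p q = (\<Sum>m\<in>M. \<Sum>n\<in>N. single (mon_mult m n) (lookup p m * lookup q n))"
proof -
  have "wmult p q = (\<Sum>m\<in>keys p. \<Sum>n\<in>N. single (mon_mult m n) (lookup p m * lookup q n))"
    unfolding wmult_eq_sum
    by (intro sum.cong refl sum.mono_neutral_left) (use assms in \<open>auto simp: in_keys_iff\<close>)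
  also have "\<dots> = (\<Sum>m\<in>M. \<Sum>n\<in>N. single (mon_mult m n) (lookup p m * lookup q n))"
    by (rule sum.mono_neutral_left) (use assms in \<open>auto simp: in_keys_iff\<close>)
  finally show ?thesis .
qed

lemma wmult_add_left: "wmult (p + q) s = wmult p s + wmult q s"
proof -
  let ?M = "keys p \<union> keys q"
  have "wmult (p + q) s = (\<Sum>m\<in>?M. \<Sum>n\<in>keys s. single (mon_mult m n) (lookup (p + q) m * lookup s n))"
    using keys_add[of p q] by (intro wmult_eq_sum_superset) auto
  also have "\<dots> = (\<Sum>m\<in>?M. \<Sum>n\<in>keys s. single (mon_mult m n) (lookup p m * lookup s n))
                + (\<Sum>m\<in>?M. \<Sum>n\<in>keys s. single (mon_mult m n) (lookup q m * lookup s n))"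
    by (simp add: lookup_add distrib_right single_add sum.distrib)
  also have "\<dots> = wmult p s + wmult q s"
    by (subst (1 2) wmult_eq_sum_superset[where M = ?M and N = "keys s"]) auto
  finally show ?thesis .
qed

lemma wmult_add_right: "wmult s (p + q) = wmult s p + wmult s q"
proof -
  let ?N = "keys p \<union> keys q"
  have "wmult s (p + q) = (\<Sum>m\<in>keys s. \<Sum>n\<in>?N. single (mon_mult m n) (lookup s m * lookup (p + q) n))"
    using keys_add[of p q] by (intro wmult_eq_sum_superset) auto
  also have "\<dots> = (\<Sum>m\<in>keys s. \<Sum>n\<in>?N. single (mon_mult m n) (lookup s m * lookup p n))
                + (\<Sum>m\<in>keys s. \<Sum>n\<in>?N. single (mon_mult m n) (lookup s m * lookup q n))"
    by (simp add: lookup_add distrib_left single_add sum.distrib)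
  also have "\<dots> = wmult s p + wmult s q"
    by (subst (1 2) wmult_eq_sum_superset[where M = "keys s" and N = ?N]) auto
  finally show ?thesis .
qed

lemma wmult_zero_left [simp]: "wmult 0 q = 0"
  and wmult_zero_right [simp]: "wmult q 0 = 0"
  by (simp_all add: wmult_def)

lemma wmult_uminus_left: "wmult (- p) q = - wmult p q"
  using wmult_add_left[of p "- p" q] by (simp add: eq_neg_iff_add_eq_0 add.commute)

lemma wmult_uminus_right: "wmult q (- p) = - wmult q p"
  using wmult_add_right[of q p "- p"] by (simp add: eq_neg_iff_add_eq_0 add.commute)

lemma wmult_diff_left: "wmult (p - q) s = wmult p s - wmult q s"
  using wmult_add_left[of p "- q" s] by (simp add: wmult_uminus_left)

lemma wmult_diff_right: "wmult s (p - q) = wmult s p - wmult s q"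
  using wmult_add_right[of s p "- q"] by (simp add: wmult_uminus_right)

lemma wmult_sum_left: "wmult (\<Sum>i\<in>I. p i) q = (\<Sum>i\<in>I. wmult (p i) q)"
  by (induction I rule: infinite_finite_induct) (auto simp: wmult_add_left)

lemma wmult_sum_right: "wmult q (\<Sum>i\<in>I. p i) = (\<Sum>i\<in>I. wmult q (p i))"
  by (induction I rule: infinite_finite_induct) (auto simp: wmult_add_right)

lemma wmult_single: "wmult (single m a) (single n b) = single (mon_mult m n) (a * b)"
  by (subst wmult_eq_sum_superset[where M = "{m}" and N = "{n}"]) auto

lemma sum_single_lookup: "(\<Sum>m\<in>keys p. single m (lookup p m)) = (p :: 'a \<Rightarrow>\<^sub>0 'b::comm_monoid_add)"
proof (rule poly_mapping_eqI)
  fix k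
  have "lookup (\<Sum>m\<in>keys p. single m (lookup p m)) k = (\<Sum>m\<in>keys p. (lookup p m when m = k))"
    by (simp add: lookup_sum lookup_single)
  also have "\<dots> = lookup p k"
    by (cases "k \<in> keys p") (auto simp: in_keys_iff when_def)
  finally show "lookup (\<Sum>m\<in>keys p. single m (lookup p m)) k = lookup p k" .
qed

lemma poly_mapping_single_induct [case_names zero add]:
  assumes "P 0" and "\<And>p m c. P p \<Longrightarrow> P (p + single m c)"
  shows "P (p :: 'a \<Rightarrow>\<^sub>0 'b::comm_monoid_add)"
proof -
  have "P (\<Sum>m\<in>K. single m (lookup p m))" if "finite K" for K
    using that
  proof (induction K rule: finite_induct)
    case (insert x F)
    then show ?case using assms(2)[OF insert.IH] by (simp add: add.commute)
  qed (simp add: assms(1))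
  then show ?thesis using sum_single_lookup[of p] by (metis finite_keys)
qed

lemma wmult_assoc: "wmult (wmult p q) s = wmult p (wmult q s)"
proof (induction p rule: poly_mapping_single_induct)
  case (add p m c)
  have "wmult (wmult (single m c) q) s = wmult (single m c) (wmult q s)"
  proof (induction q rule: poly_mapping_single_induct)
    case (add q n d)
    have "wmult (wmult (single m c) (single n d)) s = wmult (single m c) (wmult (single n d) s)"
      by (induction s rule: poly_mapping_single_induct)
        (simp_all add: wmult_add_right wmult_single mon_mult_assoc mult.assoc)
    then show ?case using add by (simp add: wmult_add_right wmult_add_left)
  qed simp
  then show ?case using add by (simp add: wmult_add_left)
qed simp

lemma wmult_ymon_unit [simp]: "wmult (ymon {#} 1) p = p"
  by (induction p rule: poly_mapping_single_induct)
    (simp_all add: ymon_def wmult_add_right wmult_single mon_mult_def)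

lemma keys_wmult: "keys (wmult p q) \<subseteq> {mon_mult m n |m n. m \<in> keys p \<and> n \<in> keys q}"
proof
  fix k assume "k \<in> keys (wmult p q)"
  then obtain m where m: "m \<in> keys p"
    and k: "k \<in> keys (\<Sum>n\<in>keys q. single (mon_mult m n) (lookup p m * lookup q n))"
    unfolding wmult_eq_sum by (rule UN_E[OF subsetD[OF keys_sum]])
  from k obtain n where n: "n \<in> keys q"
    and "k \<in> keys (single (mon_mult m n) (lookup p m * lookup q n))"
    by (rule UN_E[OF subsetD[OF keys_sum]])
  then have "k = mon_mult m n" by (simp split: if_splits)
  then show "k \<in> {mon_mult m n |m n. m \<in> keys p \<and> n \<in> keys q}"
    using m n by blast
qed

lemma lookup_wmult_unique:
  assumes unique: "\<And>m n. m \<in> keys p \<Longrightarrow> n \<in> keys q \<Longrightarrow> mon_mult m n = k \<Longrightarrow> m = m0 \<and> n = n0"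
    and k: "mon_mult m0 n0 = k"
  shows "lookup (wmult p q) k = lookup p m0 * lookup q n0"
proof -
  let ?M = "insert m0 (keys p)" and ?N = "insert n0 (keys q)"
  have "wmult p q = (\<Sum>m\<in>?M. \<Sum>n\<in>?N. single (mon_mult m n) (lookup p m * lookup q n))"
    by (rule wmult_eq_sum_superset) auto
  then have "lookup (wmult p q) k
      = (\<Sum>m\<in>?M. \<Sum>n\<in>?N. (if mon_mult m n = k then lookup p m * lookup q n else 0))"
    by (simp only: lookup_sum lookup_single when_def)
  also have "\<dots> = (\<Sum>m\<in>?M. \<Sum>n\<in>?N. (if m = m0 \<and> n = n0 then lookup p m * lookup q n else 0))"
  proof (intro sum.cong refl)
    fix m n
    show "(if mon_mult m n = k then lookup p m * lookup q n else 0)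
        = (if m = m0 \<and> n = n0 then lookup p m * lookup q n else 0)"
    proof (cases "m \<in> keys p \<and> n \<in> keys q")
      case True
      then have "mon_mult m n = k \<longleftrightarrow> m = m0 \<and> n = n0" using unique k by blast
      then show ?thesis by simp
    next
      case False
      then have "lookup p m * lookup q n = 0" by (auto simp: in_keys_iff)
      then show ?thesis by (simp add: k)
    qed
  qed
  also have "\<dots> = (\<Sum>m\<in>?M. if m = m0 then lookup p m * lookup q n0 else 0)"
    by (intro sum.cong refl) auto
  also have "\<dots> = lookup p m0 * lookup q n0"
    by simp
  finally show ?thesis .
qed

lemma ymon_kY: "ymon \<beta> c \<in> kY"
  by (simp add: kY_def ymon_def)

lemma kY_keys_subset: "keys p \<subseteq> keys r \<union> keys s \<Longrightarrow> r \<in> kY \<Longrightarrow> s \<in> kY \<Longrightarrow> p \<in> kY"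
  unfolding kY_def by blast

lemma kY_add: "r \<in> kY \<Longrightarrow> s \<in> kY \<Longrightarrow> r + s \<in> kY"
  by (rule kY_keys_subset[OF keys_add])

lemma kY_diff: "r \<in> kY \<Longrightarrow> s \<in> kY \<Longrightarrow> r - s \<in> kY"
  by (rule kY_keys_subset[OF keys_diff])

lemma kY_uminus: "r \<in> kY \<Longrightarrow> - r \<in> kY"
  unfolding kY_def by simp

lemma kY_wmult:
  assumes "r \<in> kY" "s \<in> kY"
  shows "wmult r s \<in> kY"
proof -
  have "snd m = []" if m: "m \<in> keys (wmult r s)" for m
  proof -
    obtain m1 n1 where "m = mon_mult m1 n1" "m1 \<in> keys r" "n1 \<in> keys s"
      using subsetD[OF keys_wmult m] by blast
    then show ?thesis using assms by (simp add: kY_def mon_mult_def)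
  qed
  then show ?thesis by (simp add: kY_def)
qed

lemma kY_eq_sum_ymon:
  assumes "r \<in> kY"
  shows "r = (\<Sum>m\<in>keys r. ymon (fst m) (lookup r m))"
proof -
  have "r = (\<Sum>m\<in>keys r. single m (lookup r m))" by (rule sum_single_lookup[symmetric])
  also have "\<dots> = (\<Sum>m\<in>keys r. ymon (fst m) (lookup r m))"
  proof (rule sum.cong[OF refl])
    fix m assume "m \<in> keys r"
    then have "snd m = []" using assms by (simp add: kY_def)
    then show "single m (lookup r m) = ymon (fst m) (lookup r m)" unfolding ymon_def by (cases m) simp
  qed
  finally show ?thesis .
qed

lemma ymon_commute: "wmult (ymon \<beta> c) p = wmult p (ymon \<beta> c)"
  by (induction p rule: poly_mapping_single_induct)
    (simp_all add: ymon_def wmult_add_right wmult_add_left wmult_single mon_mult_def add.commute mult.commute)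

lemma kY_commute:
  assumes "r \<in> kY"
  shows "wmult r p = wmult p r"
proof -
  have "wmult r p = (\<Sum>m\<in>keys r. wmult (ymon (fst m) (lookup r m)) p)"
    by (subst kY_eq_sum_ymon[OF assms]) (simp add: wmult_sum_left)
  also have "\<dots> = wmult p r"
    by (subst (2) kY_eq_sum_ymon[OF assms]) (simp add: wmult_sum_right ymon_commute)
  finally show ?thesis .
qed

lemma lookup_kY_wmult:
  assumes r: "r \<in> kY" and q: "\<forall>n\<in>keys q. fst n = {#}"
  shows "lookup (wmult r q) (\<beta>, w) = lookup r (\<beta>, []) * lookup q ({#}, w)"
proof (rule lookup_wmult_unique)
  fix m n assume "m \<in> keys r" "n \<in> keys q" "mon_mult m n = (\<beta>, w)"
  then show "m = (\<beta>, []) \<and> n = ({#}, w)"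
    using r q unfolding kY_def mon_mult_def by (auto simp: prod_eq_iff)
qed (simp add: mon_mult_def)

lemma lie_antisym: "lie p q = - lie q p"
  by (simp add: lie_def)

lemma lie_self [simp]: "lie p p = 0"
  by (simp add: lie_def)

lemma lie_zero_left [simp]: "lie 0 p = 0"
  and lie_zero_right [simp]: "lie p 0 = 0"
  by (simp_all add: lie_def)

lemma lie_add_left: "lie (p + q) s = lie p s + lie q s"
  and lie_add_right: "lie s (p + q) = lie s p + lie s q"
  by (simp_all add: lie_def wmult_add_left wmult_add_right)

lemma lie_kY_left:
  assumes "r \<in> kY"
  shows "lie (wmult r p) q = wmult r (lie p q)"
proof -
  have "wmult q (wmult r p) = wmult (wmult r q) p"
    by (simp only: kY_commute[OF assms, of q] wmult_assoc)
  then have "wmult q (wmult r p) = wmult r (wmult q p)"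
    by (simp only: wmult_assoc)
  then show ?thesis by (simp only: lie_def wmult_diff_right wmult_assoc)
qed

lemma lie_kY_right: "r \<in> kY \<Longrightarrow> lie p (wmult r q) = wmult r (lie p q)"
  by (simp only: lie_antisym[of p] lie_kY_left wmult_uminus_right)

lemma jacobi: "lie (lie a b) c = lie a (lie b c) - lie b (lie a c)"
  unfolding lie_def wmult_diff_left wmult_diff_right wmult_assoc
  by (simp add: algebra_simps)

definition std_poly :: "'x::linorder list \<Rightarrow> ('y, 'x, 'k::field) kpol" where
  "std_poly w = evalb 0 (std w)"

lemma std_poly_singleton: "std_poly [x] = var x"
  by (simp add: std_poly_def std_singleton)

lemma std_poly_greatest_suffix:
  "greatest_suffix w k \<Longrightarrow> std_poly w = lie (std_poly (take k w)) (std_poly (drop k w))"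
  by (simp add: std_poly_def std_greatest_suffix)

lemma evalb_no_holes: "holes t = 0 \<Longrightarrow> evalb h t = evalb h' t"
  by (induction t) auto

lemma fill_no_holes: "holes t = 0 \<Longrightarrow> fill t s = t"
  by (induction t) auto

lemma fill_H [simp]: "fill C H = C"
  by (induction C) auto

lemma evalb_fill: "evalb h (fill C t) = evalb (evalb h t) C"
  by (induction C) auto

lemma evalb_kY_hole:
  assumes r: "r \<in> kY"
  shows "holes C = 1 \<Longrightarrow> evalb (wmult r h) C = wmult r (evalb h C)"
proof (induction C)
  case (B l s)
  show ?case
  proof (cases "holes l = 0")
    case True
    then have "holes s = 1" using B.prems by simp
    then show ?thesis
      using B.IH(2) evalb_no_holes[OF True, of "wmult r h" h] by (simp add: lie_kY_right[OF r])
  next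
    case False
    then have "holes l = 1" and "holes s = 0" using B.prems by auto
    then show ?thesis
      using B.IH(1) evalb_no_holes[of s "wmult r h" h] by (simp add: lie_kY_left[OF r])
  qed
qed simp_all

lemma size_fill: "0 < holes C \<Longrightarrow> size t \<le> size (fill C t) \<and> (C \<noteq> H \<longrightarrow> size t < size (fill C t))"
proof (induction C)
  case (B l r)
  then show ?case by (cases "0 < holes l") auto
qed auto

fun punch :: "nat \<Rightarrow> 'x btree \<Rightarrow> 'x btree" where
  "punch i (L x) = (if i = 0 then H else L x)"
| "punch i H = H"
| "punch i (B l r) = (if i < length (leaves l) then B (punch i l) r
     else B l (punch (i - length (leaves l)) r))"

lemma punch_props:
  "holes t = 0 \<Longrightarrow> i < length (leaves t) \<Longrightarrow>
    holes (punch i t) = 1 \<and> pre (punch i t) = take i (leaves t) \<and>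
    fill (punch i t) (L (leaves t ! i)) = t"
proof (induction t arbitrary: i)
  case (B l r)
  then show ?case by (cases "i < length (leaves l)") (auto simp: nth_append fill_no_holes)
qed auto

lemma alsw_fact_Nil: "alsw_fact [] = []"
  unfolding alsw_fact_def
proof (rule the_equality)
  fix cs :: "'a list list"
  assume "concat cs = [] \<and> (\<forall>ci\<in>set cs. alsw ci) \<and> sorted_wrt (\<lambda>p q. p = q \<or> lexgt q p) cs"
  then show "cs = []" by (cases cs) (auto simp: alsw_def)
qed simp

lemma spec_c_eq_Nil:
  fixes a u b :: "'x::linorder list"
  assumes "spec_ok a u b [] C"
  shows "spec_c a u b = []"
proof -
  let ?P = "\<lambda>c. (\<exists>C. spec_ok a u b c C) \<and> (\<forall>c'. (\<exists>C. spec_ok a u b c' C) \<longrightarrow> length c \<le> length c')"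
  have "?P []" using assms by auto
  then have "?P (spec_c a u b)" unfolding spec_c_def by (rule someI)
  then have "length (spec_c a u b) \<le> length ([] :: 'x list)" using assms by blast
  then show ?thesis by simp
qed

text \<open>For a one-letter word \<open>u = [x]\<close> the shortest admissible \<open>c\<close> is empty, so the special
  bracketing is the standard bracketing with a hole at the position of \<open>x\<close>.\<close>

lemma special_tree_singleton:
  fixes a b :: "'x::linorder list"
  shows "holes (special_tree a [x] b) = 1 \<and> fill (special_tree a [x] b) (L x) = std (a @ [x] @ b)"
proof -
  define t where "t = std (a @ [x] @ b)"
  have lt: "leaves t = a @ [x] @ b" unfolding t_def by (rule leaves_std) simp
  define C0 where "C0 = punch (length a) t"
  have "holes t = 0" unfolding t_def by (rule holes_std)
  then have "holes C0 = 1 \<and> pre C0 = take (length a) (leaves t) \<and> fill C0 (L (leaves t ! length a)) = t"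
    unfolding C0_def by (rule punch_props) (simp add: lt)
  then have ok0: "spec_ok a [x] b [] C0"
    unfolding spec_ok_def using lt by (simp add: std_singleton t_def nth_append)
  then have c: "spec_c a [x] b = []" by (rule spec_c_eq_Nil)
  have "spec_ok a [x] b [] (spec_ctx a [x] b)"
    unfolding spec_ctx_def c using ok0 by (rule someI)
  moreover have "special_tree a [x] b = spec_ctx a [x] b"
    unfolding special_tree_def c by (simp add: alsw_fact_Nil)
  ultimately show ?thesis unfolding spec_ok_def by (simp add: std_singleton)
qed

lemma nsw_kY_var:
  assumes "r \<in> kY" and "lx (wmult r (var x)) = [x]"
  shows "nsw a (wmult r (var x)) b = wmult r (std_poly (a @ [x] @ b))"
proof -
  note special = special_tree_singleton[of a x b]
  have "nsw a (wmult r (var x)) b = wmult r (evalb (evalb 0 (L x)) (special_tree a [x] b))"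
    unfolding nsw_def assms(2) using evalb_kY_hole[OF assms(1)] special by simp
  also have "\<dots> = wmult r (std_poly (a @ [x] @ b))"
    unfolding std_poly_def using special by (metis evalb.simps(1) evalb_fill)
  finally show ?thesis .
qed

lemma nsw_Nil_Nil: "nsw [] f [] = f"
proof -
  define u where "u = lx f"
  have ok0: "spec_ok [] u [] [] H" unfolding spec_ok_def by simp
  then have c: "spec_c [] u [] = []" by (rule spec_c_eq_Nil)
  have "spec_ok [] u [] [] (spec_ctx [] u [])"
    unfolding spec_ctx_def c using ok0 by (rule someI)
  then have "spec_ctx [] u [] = H"
    unfolding spec_ok_def using size_fill[of "spec_ctx [] u []" "std u"] by auto
  then have "special_tree [] u [] = H"
    unfolding special_tree_def c by (simp add: alsw_fact_Nil)
  then show ?thesis unfolding nsw_def u_def by simp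
qed

inductive_set kY_span :: "'x::linorder list set \<Rightarrow> ('y, 'x, 'k::field) kpol set" for W where
  zero: "0 \<in> kY_span W"
| add_std_poly: "p \<in> kY_span W \<Longrightarrow> r \<in> kY \<Longrightarrow> z \<in> W \<Longrightarrow> p + wmult r (std_poly z) \<in> kY_span W"

lemma kY_span_std_poly: "z \<in> W \<Longrightarrow> std_poly z \<in> kY_span W"
  using kY_span.add_std_poly[OF kY_span.zero ymon_kY, of z W "{#}" 1] by simp

lemma kY_span_add: "q \<in> kY_span W \<Longrightarrow> p \<in> kY_span W \<Longrightarrow> p + q \<in> kY_span W"
proof (induction q rule: kY_span.induct)
  case (add_std_poly q r z)
  have "p + (q + wmult r (std_poly z)) = (p + q) + wmult r (std_poly z)" by (simp add: add.assoc)
  then show ?case using add_std_poly by (metis kY_span.add_std_poly)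
qed simp

lemma kY_span_kY_mult: "p \<in> kY_span W \<Longrightarrow> s \<in> kY \<Longrightarrow> wmult s p \<in> kY_span W"
proof (induction p rule: kY_span.induct)
  case (add_std_poly p r z)
  have "wmult s (p + wmult r (std_poly z)) = wmult s p + wmult (wmult s r) (std_poly z)"
    by (simp add: wmult_add_right wmult_assoc)
  then show ?case using add_std_poly kY_wmult by (metis kY_span.add_std_poly)
qed (simp add: kY_span.zero)

lemma kY_span_uminus: "p \<in> kY_span W \<Longrightarrow> - p \<in> kY_span W"
proof (induction p rule: kY_span.induct)
  case (add_std_poly p r z)
  have "- (p + wmult r (std_poly z)) = - p + wmult (- r) (std_poly z)"
    by (simp add: wmult_uminus_left)
  then show ?case using add_std_poly kY_uminus by (metis kY_span.add_std_poly)
qed (simp add: kY_span.zero)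

lemma kY_span_diff: "p \<in> kY_span W \<Longrightarrow> q \<in> kY_span W \<Longrightarrow> p - q \<in> kY_span W"
  using kY_span_add[of "- q" W p] kY_span_uminus[of q W] by simp

lemma kY_span_mono: "p \<in> kY_span W \<Longrightarrow> W \<subseteq> W' \<Longrightarrow> p \<in> kY_span W'"
proof (induction p rule: kY_span.induct)
  case (add_std_poly p r z)
  then show ?case by (auto intro: kY_span.add_std_poly)
qed (simp add: kY_span.zero)

lemma kY_span_lie_left:
  "p \<in> kY_span W \<Longrightarrow> (\<And>z. z \<in> W \<Longrightarrow> lie (std_poly z) q \<in> kY_span W') \<Longrightarrow> lie p q \<in> kY_span W'"
proof (induction p rule: kY_span.induct)
  case (add_std_poly p r z)
  have "lie (p + wmult r (std_poly z)) q = lie p q + wmult r (lie (std_poly z) q)"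
    by (simp add: lie_add_left lie_kY_left[OF add_std_poly.hyps(2)])
  then show ?case using add_std_poly kY_span_add kY_span_kY_mult by metis
qed (simp add: kY_span.zero)

lemma kY_span_lie_right:
  "q \<in> kY_span W \<Longrightarrow> (\<And>z. z \<in> W \<Longrightarrow> lie p (std_poly z) \<in> kY_span W') \<Longrightarrow> lie p q \<in> kY_span W'"
proof (induction q rule: kY_span.induct)
  case (add_std_poly q r z)
  have "lie p (q + wmult r (std_poly z)) = lie p q + wmult r (lie p (std_poly z))"
    by (simp add: lie_add_right lie_kY_right[OF add_std_poly.hyps(2)])
  then show ?case using add_std_poly kY_span_add kY_span_kY_mult by metis
qed (simp add: kY_span.zero)

section \<open>Standard Lie polynomials span the free Lie algebra\<close>

definition alsw_above :: "'x::linorder list \<Rightarrow> 'x set \<Rightarrow> nat \<Rightarrow> 'x list set" where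
  "alsw_above v A n = {z. alsw z \<and> lexgt z v \<and> set z \<subseteq> A \<and> length z = n}"

definition lexgt_count :: "'x::linorder list \<Rightarrow> 'x list \<Rightarrow> nat" where
  "lexgt_count u v = card {z. length z \<le> length u + length v \<and> set z \<subseteq> set u \<union> set v \<and> lexgt z v}"

lemma lexgt_count_less:
  assumes "set u' \<union> set v' \<subseteq> set u \<union> set v" "length u' + length v' = length u + length v"
    and "lexgt v' v"
  shows "lexgt_count u' v' < lexgt_count u v"
proof -
  let ?N = "length u + length v"
  let ?S' = "{z. length z \<le> ?N \<and> set z \<subseteq> set u' \<union> set v' \<and> lexgt z v'}"
  let ?S = "{z. length z \<le> ?N \<and> set z \<subseteq> set u \<union> set v \<and> lexgt z v}"
  have "finite ?S"
    by (rule finite_subset[OF _ finite_lists_length_le[of "set u \<union> set v" ?N]]) auto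
  moreover have "?S' \<subset> ?S"
  proof
    show "?S' \<subseteq> ?S" using assms lexgt_trans by blast
    have "v' \<in> ?S" "v' \<notin> ?S'" using assms lexgt_irrefl by auto
    then show "?S' \<noteq> ?S" by blast
  qed
  ultimately show ?thesis unfolding lexgt_count_def using assms(2) by (simp add: psubset_card_mono)
qed

lemma lie_std_poly_standard_pair:
  assumes u: "alsw u" and v: "alsw v" and uv: "lexgt u v"
    and suffixes: "\<forall>j. 0 < j \<longrightarrow> j < length u \<longrightarrow> drop j u = v \<or> lexgt v (drop j u)"
  shows "lie (std_poly u) (std_poly v) \<in> kY_span (alsw_above v (set u \<union> set v) (length u + length v))"
proof -
  have "std_poly (u @ v) = lie (std_poly u) (std_poly v)"
    using std_poly_greatest_suffix[OF greatest_suffix_append[OF u v suffixes]] by simp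
  moreover have "u @ v \<in> alsw_above v (set u \<union> set v) (length u + length v)"
    using alsw_append[OF u v uv] unfolding alsw_above_def by auto
  ultimately show ?thesis by (metis kY_span_std_poly)
qed

lemma lie_std_poly_by_lexgt:
  fixes a b :: "'x::linorder list"
  assumes "lexgt a b \<Longrightarrow> lie (std_poly a :: ('y, 'x, 'k::field) kpol) (std_poly b) \<in> kY_span T"
    and "lexgt b a \<Longrightarrow> lie (std_poly b :: ('y, 'x, 'k) kpol) (std_poly a) \<in> kY_span T"
  shows "lie (std_poly a :: ('y, 'x, 'k) kpol) (std_poly b) \<in> kY_span T"
proof -
  consider "a = b" | "lexgt a b" | "lexgt b a" using lexgt_total by blast
  then show ?thesis
  proof cases
    case 3
    then have "- lie (std_poly b :: ('y, 'x, 'k) kpol) (std_poly a) \<in> kY_span T"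
      by (intro kY_span_uminus assms(2))
    then show ?thesis by (simp only: lie_antisym[of "std_poly a"])
  qed (simp_all add: kY_span.zero assms(1))
qed

text \<open>If \<open>u = u\<^sub>1u\<^sub>2\<close> is not a standard pair with \<open>v\<close>, the Jacobi identity
  \<open>[[u\<^sub>1,u\<^sub>2],v] = [u\<^sub>1,[u\<^sub>2,v]] - [u\<^sub>2,[u\<^sub>1,v]]\<close> reduces to shorter brackets with \<open>v\<close>,
  whose terms are then bracketed with a word above \<open>v\<close> again.\<close>

lemma lie_std_poly_nonstandard_pair:
  fixes u v :: "'x::linorder list"
  assumes u: "alsw u" "greatest_suffix u k"
    and above: "lexgt (take k u) v" "lexgt (drop k u) v"
    and shorter: "\<And>w. w \<in> {take k u, drop k u} \<Longrightarrow> lie (std_poly w :: ('y, 'x, 'k::field) kpol) (std_poly v)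
      \<in> kY_span (alsw_above v (set w \<union> set v) (length w + length v))"
    and pair: "\<And>a b. alsw a \<Longrightarrow> alsw b \<Longrightarrow> lexgt a v \<Longrightarrow> lexgt b v \<Longrightarrow> set a \<union> set b \<subseteq> set u \<union> set v
      \<Longrightarrow> length a + length b = length u + length v \<Longrightarrow> lie (std_poly a :: ('y, 'x, 'k) kpol) (std_poly b)
      \<in> kY_span (alsw_above v (set u \<union> set v) (length u + length v))"
  shows "lie (std_poly u :: ('y, 'x, 'k) kpol) (std_poly v)
    \<in> kY_span (alsw_above v (set u \<union> set v) (length u + length v))"
proof -
  let ?T = "kY_span (alsw_above v (set u \<union> set v) (length u + length v)) :: ('y, 'x, 'k) kpol set"
  have factors: "alsw w \<and> lexgt w v \<and> set w \<subseteq> set u" if "w \<in> {take k u, drop k u}" for w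
    using that above alsw_take_greatest_suffix[OF u] alsw_drop_greatest_suffix[OF u(2)]
    by (auto dest: in_set_takeD in_set_dropD)
  have lengths: "length (take k u) + length (drop k u) = length u"
    using u(2) by (simp add: greatest_suffix_def)
  have summand: "lie (std_poly w) (lie (std_poly w') (std_poly v)) \<in> ?T"
    if ww': "{w, w'} = {take k u, drop k u}" for w w'
  proof -
    have "w' \<in> {take k u, drop k u}" using ww' by blast
    then have "lie (std_poly w' :: ('y, 'x, 'k) kpol) (std_poly v)
        \<in> kY_span (alsw_above v (set w' \<union> set v) (length w' + length v))"
      by (rule shorter)
    then show ?thesis
    proof (rule kY_span_lie_right)
      fix z assume "z \<in> alsw_above v (set w' \<union> set v) (length w' + length v)"
      moreover have "length w + length w' = length u" using ww' lengths by (auto simp: doubleton_eq_iff)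
      ultimately show "lie (std_poly w) (std_poly z) \<in> ?T"
        using factors ww' by (intro pair) (auto simp: alsw_above_def)
    qed
  qed
  have "lie (std_poly u :: ('y, 'x, 'k) kpol) (std_poly v)
      = lie (std_poly (take k u)) (lie (std_poly (drop k u)) (std_poly v))
      - lie (std_poly (drop k u)) (lie (std_poly (take k u)) (std_poly v))"
    by (simp add: std_poly_greatest_suffix[OF u(2)] jacobi)
  then show ?thesis by (simp add: kY_span_diff summand insert_commute)
qed

lemma greatest_suffix_factors_above:
  assumes uv: "lexgt u v"
    and nonstandard: "\<not> (\<forall>j. 0 < j \<longrightarrow> j < length u \<longrightarrow> drop j u = v \<or> lexgt v (drop j u))"
  obtains k where "greatest_suffix u k" "lexgt (take k u) v" "lexgt (drop k u) v"
proof -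
  obtain j where j: "0 < j" "j < length u" "drop j u \<noteq> v" "\<not> lexgt v (drop j u)"
    using nonstandard by blast
  then have "2 \<le> length u" by simp
  then obtain k where k: "greatest_suffix u k" using greatest_suffix_exists by blast
  have "lexgt (drop j u) v" using j lexgt_total by blast
  moreover have "drop j u = drop k u \<or> lexgt (drop k u) (drop j u)"
    using k j unfolding greatest_suffix_def by blast
  ultimately have "lexgt (drop k u) v" using lexgt_trans by metis
  moreover have "lexgt (take k u) u"
    using k lexgt_append_nonempty[of "drop k u" "take k u"] by (simp add: greatest_suffix_def)
  then have "lexgt (take k u) v" using uv lexgt_trans by blast
  ultimately show ?thesis using k that by blast
qed

lemma lie_std_poly_in_alsw_above_any_order:
  fixes a b v :: "'x::linorder list"
  assumes ordered: "\<And>a b. alsw a \<Longrightarrow> alsw b \<Longrightarrow> lexgt a b \<Longrightarrow> lexgt b v \<Longrightarrow> set a \<union> set b \<subseteq> A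
      \<Longrightarrow> length a + length b = n \<Longrightarrow> lie (std_poly a :: ('y, 'x, 'k::field) kpol) (std_poly b)
      \<in> kY_span (alsw_above b (set a \<union> set b) n)"
    and ab: "alsw a" "alsw b" "lexgt a v" "lexgt b v" "set a \<union> set b \<subseteq> A" "length a + length b = n"
  shows "lie (std_poly a :: ('y, 'x, 'k) kpol) (std_poly b) \<in> kY_span (alsw_above v A n)"
proof (rule lie_std_poly_by_lexgt)
  have mono: "alsw_above b' (set a' \<union> set b') n \<subseteq> alsw_above v A n"
    if "lexgt b' v" "set a' \<union> set b' \<subseteq> A" for a' b'
    using that lexgt_trans unfolding alsw_above_def by auto
  show "lie (std_poly a :: ('y, 'x, 'k) kpol) (std_poly b) \<in> kY_span (alsw_above v A n)" if "lexgt a b"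
    using ordered[OF ab(1,2) that ab(4-6)] mono[OF ab(4,5)] by (rule kY_span_mono)
  have "set b \<union> set a \<subseteq> A" "length b + length a = n" using ab(5,6) by auto
  then show "lie (std_poly b :: ('y, 'x, 'k) kpol) (std_poly a) \<in> kY_span (alsw_above v A n)" if "lexgt b a"
    using ordered[OF ab(2,1) that ab(3)] mono[OF ab(3)] by (metis kY_span_mono)
qed

lemma lie_std_poly_in_alsw_above:
  fixes u v :: "'x::linorder list"
  assumes "alsw u" "alsw v" "lexgt u v"
  shows "lie (std_poly u :: ('y, 'x, 'k::field) kpol) (std_poly v)
    \<in> kY_span (alsw_above v (set u \<union> set v) (length u + length v))"
  using assms
proof (induction "(u, v)" arbitrary: u v
    rule: wf_induct[OF wf_measures[of "[\<lambda>(u, v). length u + length v, \<lambda>(u, v). lexgt_count u v]"]])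
  case (1 u v)
  let ?T = "kY_span (alsw_above v (set u \<union> set v) (length u + length v)) :: ('y, 'x, 'k) kpol set"
  have IH: "lie (std_poly u' :: ('y, 'x, 'k) kpol) (std_poly v')
      \<in> kY_span (alsw_above v' (set u' \<union> set v') (length u' + length v'))"
    if "length u' + length v' < length u + length v \<or>
        length u' + length v' = length u + length v \<and> lexgt_count u' v' < lexgt_count u v"
      "alsw u'" "alsw v'" "lexgt u' v'" for u' v'
  proof -
    have "((u', v'), (u, v)) \<in> measures [\<lambda>(u, v). length u + length v, \<lambda>(u, v). lexgt_count u v]"
      using that(1) by auto
    then show ?thesis using 1(1) that(2-4) by blast
  qed
  have pair: "lie (std_poly a) (std_poly b) \<in> ?T"
    if "alsw a" "alsw b" "lexgt a v" "lexgt b v" "set a \<union> set b \<subseteq> set u \<union> set v"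
      "length a + length b = length u + length v" for a b
  proof (rule lie_std_poly_in_alsw_above_any_order[OF _ that])
    fix a' b' assume ab: "alsw a'" "alsw b'" "lexgt a' b'" "lexgt b' v"
      "set a' \<union> set b' \<subseteq> set u \<union> set v" "length a' + length b' = length u + length v"
    then show "lie (std_poly a' :: ('y, 'x, 'k) kpol) (std_poly b')
        \<in> kY_span (alsw_above b' (set a' \<union> set b') (length u + length v))"
      using IH[of a' b'] lexgt_count_less[of a' b' u v] by simp
  qed
  show ?case
  proof (cases "\<forall>j. 0 < j \<longrightarrow> j < length u \<longrightarrow> drop j u = v \<or> lexgt v (drop j u)")
    case True
    then show ?thesis using lie_std_poly_standard_pair 1(2-4) by blast
  next
    case False
    then obtain k where k: "greatest_suffix u k"
      and take_above: "lexgt (take k u) v" and drop_above: "lexgt (drop k u) v"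
      using greatest_suffix_factors_above 1(4) by blast
    have shorter: "lie (std_poly w :: ('y, 'x, 'k) kpol) (std_poly v)
        \<in> kY_span (alsw_above v (set w \<union> set v) (length w + length v))"
      if "w \<in> {take k u, drop k u}" for w
    proof (rule IH)
      show "alsw w" using that alsw_take_greatest_suffix[OF 1(2) k] alsw_drop_greatest_suffix[OF k]
        by blast
      show "lexgt w v" using that take_above drop_above by blast
      have "0 < k" "k < length u" using k by (auto simp: greatest_suffix_def)
      then show "length w + length v < length u + length v \<or>
          length w + length v = length u + length v \<and> lexgt_count w v < lexgt_count u v"
        using that by auto
    qed (rule 1(3))
    show ?thesis by (rule lie_std_poly_nonstandard_pair[OF 1(2) k take_above drop_above shorter pair])
  qed
qed

lemma lie_alg_subset_kY_span:
  "(p :: ('y, 'x::linorder, 'k::field) kpol) \<in> lie_alg \<Longrightarrow> p \<in> kY_span {z. alsw z}"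
proof (induction p rule: lie_alg.induct)
  case (gen x)
  have "std_poly [x] \<in> kY_span {z. alsw z}" by (rule kY_span_std_poly) (simp add: alsw_singleton)
  then show ?case by (simp add: std_poly_singleton)
next
  case (add p q)
  then show ?case by (intro kY_span_add)
next
  case (smul r p)
  then show ?case by (intro kY_span_kY_mult)
next
  case (br p q)
  have above: "alsw_above v A n \<subseteq> {z. alsw z}" for v :: "'x list" and A n
    unfolding alsw_above_def by (rule Collect_mono) simp
  have pair: "lie (std_poly a :: ('y, 'x, 'k) kpol) (std_poly b) \<in> kY_span {z. alsw z}"
    if ab: "alsw a" "alsw b" for a b
  proof (rule lie_std_poly_by_lexgt)
    show "lie (std_poly a) (std_poly b) \<in> kY_span {z. alsw z}" if "lexgt a b"
      by (rule kY_span_mono[OF lie_std_poly_in_alsw_above[OF ab that] above])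
    show "lie (std_poly b) (std_poly a) \<in> kY_span {z. alsw z}" if "lexgt b a"
      by (rule kY_span_mono[OF lie_std_poly_in_alsw_above[OF ab(2,1) that] above])
  qed
  show ?case
  proof (rule kY_span_lie_left[OF br.IH(1)])
    fix z :: "'x list" assume "z \<in> {z. alsw z}"
    then show "lie (std_poly z) q \<in> kY_span {z. alsw z}"
      by (intro kY_span_lie_right[OF br.IH(2)] pair) simp_all
  qed
qed

lemma deglex_irrefl: "\<not> deglex_gt u u"
  by (simp add: deglex_gt_def lexgt_irrefl)

lemma deglex_trans: "deglex_gt u v \<Longrightarrow> deglex_gt v w \<Longrightarrow> deglex_gt u w"
  unfolding deglex_gt_def using lexgt_trans by (metis order.strict_trans)

lemma deglex_asym: "deglex_gt u v \<Longrightarrow> \<not> deglex_gt v u"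
  using deglex_trans deglex_irrefl by blast

lemma deglex_total: "u \<noteq> v \<Longrightarrow> deglex_gt u v \<or> deglex_gt v u"
  unfolding deglex_gt_def using lexgt_total by (metis linorder_neqE_nat)

lemma deglexY_irrefl: "\<not> deglexY_gt m m"
  by (simp add: deglexY_gt_def lexgt_irrefl)

lemma deglexY_trans: "deglexY_gt a b \<Longrightarrow> deglexY_gt b c \<Longrightarrow> deglexY_gt a c"
  unfolding deglexY_gt_def using lexgt_trans by (metis order.strict_trans)

lemma deglexY_total: "a \<noteq> b \<Longrightarrow> deglexY_gt a b \<or> deglexY_gt b a"
proof -
  assume "a \<noteq> b"
  then have "rev (sorted_list_of_multiset a) \<noteq> rev (sorted_list_of_multiset b)"
    by (metis mset_sorted_list_of_multiset rev_rev_ident)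
  then show ?thesis unfolding deglexY_gt_def using lexgt_total by (metis linorder_neqE_nat)
qed

lemma not_deglexY_gt_empty: "\<not> deglexY_gt {#} b"
  unfolding deglexY_gt_def by auto

lemma mon_gt_irrefl: "\<not> mon_gt m m"
  by (simp add: mon_gt_def deglex_irrefl deglexY_irrefl)

lemma mon_gt_trans:
  assumes "mon_gt a b" "mon_gt b c"
  shows "mon_gt a c"
proof (cases "deglex_gt (snd a) (snd b)")
  case True
  then show ?thesis using assms(2) deglex_trans[of "snd a" "snd b" "snd c"] by (auto simp: mon_gt_def)
next
  case False
  then have "snd a = snd b" "deglexY_gt (fst a) (fst b)" using assms(1) by (auto simp: mon_gt_def)
  then show ?thesis using assms(2) deglexY_trans[of "fst a" "fst b" "fst c"] by (auto simp: mon_gt_def)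
qed

lemma mon_gt_asym: "mon_gt a b \<Longrightarrow> \<not> mon_gt b a"
  using mon_gt_trans mon_gt_irrefl by blast

lemma mon_gt_total: "a \<noteq> b \<Longrightarrow> mon_gt a b \<or> mon_gt b a"
  unfolding mon_gt_def using deglex_total deglexY_total by (auto simp: prod_eq_iff)

lemma finite_deglex_greatest:
  assumes "finite Z" "Z \<noteq> {}"
  shows "\<exists>m\<in>Z. \<forall>z\<in>Z. z \<noteq> m \<longrightarrow> deglex_gt m z"
proof (rule finite_has_greatest_wrt[OF assms])
  fix a b c
  show "deglex_gt a b \<Longrightarrow> deglex_gt b c \<Longrightarrow> deglex_gt a c" by (rule deglex_trans)
  show "a \<noteq> b \<Longrightarrow> deglex_gt a b \<or> deglex_gt b a" by (rule deglex_total)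
qed

lemma lead_greatest:
  assumes "p \<noteq> 0"
  shows "lead p \<in> keys p" and "\<And>n. n \<in> keys p \<Longrightarrow> n \<noteq> lead p \<Longrightarrow> mon_gt (lead p) n"
proof -
  have "\<exists>m\<in>keys p. \<forall>n\<in>keys p. n \<noteq> m \<longrightarrow> mon_gt m n"
  proof (rule finite_has_greatest_wrt)
    show "keys p \<noteq> {}" using assms by simp
    fix a b c
    show "mon_gt a b \<Longrightarrow> mon_gt b c \<Longrightarrow> mon_gt a c" by (rule mon_gt_trans)
    show "a \<noteq> b \<Longrightarrow> mon_gt a b \<or> mon_gt b a" by (rule mon_gt_total)
  qed simp
  then obtain m where m: "m \<in> keys p" "\<forall>n\<in>keys p. n \<noteq> m \<longrightarrow> mon_gt m n" by blast
  have "lead p = m" unfolding lead_def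
  proof (rule the_equality)
    show "m \<in> keys p \<and> (\<forall>n\<in>keys p. n \<noteq> m \<longrightarrow> mon_gt m n)" using m by blast
    fix m' assume m': "m' \<in> keys p \<and> (\<forall>n\<in>keys p. n \<noteq> m' \<longrightarrow> mon_gt m' n)"
    show "m' = m"
    proof (rule ccontr)
      assume "m' \<noteq> m"
      then have "mon_gt m' m" "mon_gt m m'" using m m' by auto
      then show False using mon_gt_asym by blast
    qed
  qed
  then show "lead p \<in> keys p" "\<And>n. n \<in> keys p \<Longrightarrow> n \<noteq> lead p \<Longrightarrow> mon_gt (lead p) n"
    using m by auto
qed

section \<open>Leading words of standard Lie polynomials\<close>

definition lexge :: "'x::linorder list \<Rightarrow> 'x list \<Rightarrow> bool" where
  "lexge u z \<longleftrightarrow> z = u \<or> lexgt u z"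

lemma lexge_append:
  "length z1 = length u \<Longrightarrow> lexge u z1 \<Longrightarrow> lexge v z2 \<Longrightarrow> lexge (u @ v) (z1 @ z2)"
  unfolding lexge_def by (metis lexgt_append_left lexgt_append_same_length)

definition triangular :: "('y, 'x::linorder, 'k::field) kpol \<Rightarrow> 'x list \<Rightarrow> bool" where
  "triangular p w \<longleftrightarrow> lookup p ({#}, w) = 1 \<and>
     (\<forall>m\<in>keys p. fst m = {#} \<and> length (snd m) = length w \<and> lexge w (snd m))"

lemma keys_wmult_triangular:
  assumes "triangular p u" "triangular q v" "m \<in> keys (wmult p q)"
  shows "fst m = {#} \<and> length (snd m) = length (u @ v) \<and> lexge (u @ v) (snd m)"
proof -
  obtain m1 n1 where "m = mon_mult m1 n1" "m1 \<in> keys p" "n1 \<in> keys q"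
    using subsetD[OF keys_wmult assms(3)] by blast
  with assms(1,2) show ?thesis
    unfolding triangular_def mon_mult_def by (auto intro: lexge_append)
qed

lemma lookup_wmult_triangular:
  assumes p: "triangular p u" and q: "triangular q v"
  shows "lookup (wmult p q) ({#}, u @ v) = 1"
proof -
  have "lookup (wmult p q) ({#}, u @ v) = lookup p ({#}, u) * lookup q ({#}, v)"
  proof (rule lookup_wmult_unique)
    fix m n assume "m \<in> keys p" "n \<in> keys q" "mon_mult m n = ({#}, u @ v)"
    then show "m = ({#}, u) \<and> n = ({#}, v)"
      using p q unfolding triangular_def mon_mult_def by (auto simp: prod_eq_iff append_eq_append_conv)
  qed (simp add: mon_mult_def)
  then show ?thesis using p q by (simp add: triangular_def)
qed

lemma triangular_lie:
  assumes tu: "triangular p u" and tv: "triangular q v" and rotation: "lexgt (u @ v) (v @ u)"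
  shows "triangular (lie p q) (u @ v)"
proof -
  have lower: "lexgt (u @ v) (snd m)" if "m \<in> keys (wmult q p)" for m
  proof -
    have "snd m = v @ u \<or> lexgt (v @ u) (snd m)"
      using keys_wmult_triangular[OF tv tu that] by (simp add: lexge_def)
    then show ?thesis using rotation lexgt_trans[OF rotation] by auto
  qed
  have "lookup (wmult q p) ({#}, u @ v) = 0"
  proof (rule ccontr)
    assume "lookup (wmult q p) ({#}, u @ v) \<noteq> 0"
    then have "lexgt (u @ v) (u @ v)" using lower[of "({#}, u @ v)"] by (simp add: in_keys_iff)
    then show False using lexgt_irrefl by blast
  qed
  then have "lookup (lie p q) ({#}, u @ v) = 1"
    unfolding lie_def lookup_minus using lookup_wmult_triangular[OF tu tv] by simp
  moreover have "fst m = {#} \<and> length (snd m) = length (u @ v) \<and> lexge (u @ v) (snd m)"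
    if "m \<in> keys (lie p q)" for m
  proof -
    have "m \<in> keys (wmult p q) \<union> keys (wmult q p)"
      using that unfolding lie_def by (rule subsetD[OF keys_diff])
    then consider "m \<in> keys (wmult p q)" | "m \<in> keys (wmult q p)" by blast
    then show ?thesis
    proof cases
      case 1
      then show ?thesis by (rule keys_wmult_triangular[OF tu tv])
    next
      case 2
      then show ?thesis using keys_wmult_triangular[OF tv tu 2] lower[OF 2] by (simp add: lexge_def)
    qed
  qed
  ultimately show ?thesis by (simp add: triangular_def)
qed

lemma triangular_std_poly:
  fixes w :: "'x::linorder list"
  assumes "alsw w"
  shows "triangular (std_poly w :: ('y, 'x, 'k::field) kpol) w"
proof -
  have "w \<noteq> []" using assms alsw_def by blast
  then show ?thesis using assms
  proof (induction w rule: std_induct)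
    case (singleton x)
    then show ?case unfolding triangular_def std_poly_singleton var_def lexge_def by simp
  next
    case (split w k)
    have ne: "take k w \<noteq> []" "drop k w \<noteq> []" using split(1) by (auto simp: greatest_suffix_def)
    have rotation: "lexgt w (v @ u)" if "w = u @ v" "u \<noteq> []" "v \<noteq> []" for u v
      using split(4) that unfolding alsw_def by blast
    have rot: "lexgt (take k w @ drop k w) (drop k w @ take k w)"
      using rotation[of "take k w" "drop k w"] ne by simp
    have tu: "triangular (std_poly (take k w) :: ('y, 'x, 'k) kpol) (take k w)"
      by (rule split(2)[OF alsw_take_greatest_suffix[OF split(4,1)]])
    have tv: "triangular (std_poly (drop k w) :: ('y, 'x, 'k) kpol) (drop k w)"
      by (rule split(3)[OF alsw_drop_greatest_suffix[OF split(1)]])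
    have "triangular (lie (std_poly (take k w)) (std_poly (drop k w)) :: ('y, 'x, 'k) kpol)
        (take k w @ drop k w)"
      by (rule triangular_lie[OF tu tv rot])
    then show ?case by (simp add: std_poly_greatest_suffix[OF split(1)])
  qed
qed

lemma kY_span_eq_sum:
  assumes "p \<in> kY_span W"
  shows "\<exists>Z c. finite Z \<and> Z \<subseteq> W \<and> (\<forall>z\<in>Z. c z \<in> kY) \<and> p = (\<Sum>z\<in>Z. wmult (c z) (std_poly z))"
  using assms
proof (induction p rule: kY_span.induct)
  case zero
  show ?case by (rule exI[of _ "{}"]) simp
next
  case (add_std_poly p r z)
  then obtain Z c where Z: "finite Z" "Z \<subseteq> W" "\<forall>z\<in>Z. c z \<in> kY"
    and p: "p = (\<Sum>z\<in>Z. wmult (c z) (std_poly z))" by blast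
  define d where "d = c(z := (if z \<in> Z then c z + r else r))"
  have "p + wmult r (std_poly z) = (\<Sum>z'\<in>insert z Z. wmult (d z') (std_poly z'))"
  proof (cases "z \<in> Z")
    case True
    have "(\<Sum>z'\<in>Z. wmult (d z') (std_poly z')) = wmult (d z) (std_poly z) + (\<Sum>z'\<in>Z - {z}. wmult (c z') (std_poly z'))"
      using Z(1) True by (simp add: sum.remove d_def)
    moreover have "p = wmult (c z) (std_poly z) + (\<Sum>z'\<in>Z - {z}. wmult (c z') (std_poly z'))"
      using Z(1) True by (simp add: p sum.remove)
    ultimately show ?thesis using True by (simp add: d_def wmult_add_left algebra_simps insert_absorb)
  next
    case False
    then have "(\<Sum>z'\<in>Z. wmult (d z') (std_poly z')) = p"
      unfolding p d_def by (intro sum.cong) auto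
    then show ?thesis using False Z(1) by (simp add: d_def add.commute)
  qed
  moreover have "\<forall>z'\<in>insert z Z. d z' \<in> kY" using Z(3) add_std_poly.hyps(2,3) by (simp add: d_def kY_add)
  ultimately show ?case using Z add_std_poly.hyps(3) by (intro exI[of _ "insert z Z"] exI[of _ d]) auto
qed

definition lyndon_expansion :: "'x::linorder list set \<Rightarrow> ('x list \<Rightarrow> ('y, 'x, 'k::field) kpol)
    \<Rightarrow> ('y, 'x, 'k) kpol \<Rightarrow> bool" where
  "lyndon_expansion Z c p \<longleftrightarrow> finite Z \<and> (\<forall>z\<in>Z. alsw z \<and> c z \<in> kY \<and> c z \<noteq> 0)
     \<and> p = (\<Sum>z\<in>Z. wmult (c z) (std_poly z))"

lemma lie_alg_lyndon_expansion:
  assumes "p \<in> lie_alg"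
  shows "\<exists>Z c. lyndon_expansion Z c p"
proof -
  obtain Z c where Z: "finite Z" "Z \<subseteq> {z. alsw z}" "\<forall>z\<in>Z. c z \<in> kY"
    and p: "p = (\<Sum>z\<in>Z. wmult (c z) (std_poly z))"
    using kY_span_eq_sum[OF lie_alg_subset_kY_span[OF assms]] by blast
  let ?Z = "{z \<in> Z. c z \<noteq> 0}"
  have "p = (\<Sum>z\<in>?Z. wmult (c z) (std_poly z))"
    unfolding p using Z(1) by (intro sum.mono_neutral_right) auto
  then have "lyndon_expansion ?Z c p" unfolding lyndon_expansion_def using Z by auto
  then show ?thesis by blast
qed

lemma lookup_std_poly_nonzero:
  assumes "alsw z" "lookup (std_poly z :: ('y, 'x::linorder, 'k::field) kpol) (\<beta>, w) \<noteq> 0"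
  shows "\<beta> = {#}" and "w = z \<or> deglex_gt z w"
proof -
  have "(\<beta>, w) \<in> keys (std_poly z :: ('y, 'x, 'k) kpol)" using assms(2) by (simp add: in_keys_iff)
  moreover have "triangular (std_poly z :: ('y, 'x, 'k) kpol) z" by (rule triangular_std_poly[OF assms(1)])
  ultimately have "\<beta> = {#} \<and> length w = length z \<and> lexge z w"
    unfolding triangular_def by fastforce
  then show "\<beta> = {#}" "w = z \<or> deglex_gt z w" unfolding lexge_def deglex_gt_def by auto
qed

lemma lookup_lyndon_expansion:
  fixes c :: "'x::linorder list \<Rightarrow> ('y, 'x, 'k::field) kpol"
  assumes "lyndon_expansion Z c f"
  shows "lookup f (\<beta>, w) = (\<Sum>z\<in>Z. lookup (c z) (\<beta>, []) * lookup (std_poly z :: ('y, 'x, 'k) kpol) ({#}, w))"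
proof -
  have "lookup (wmult (c z) (std_poly z)) (\<beta>, w)
      = lookup (c z) (\<beta>, []) * lookup (std_poly z :: ('y, 'x, 'k) kpol) ({#}, w)"
    if "z \<in> Z" for z
  proof (rule lookup_kY_wmult)
    show "c z \<in> kY" using assms that unfolding lyndon_expansion_def by blast
    show "\<forall>n\<in>keys (std_poly z :: ('y, 'x, 'k) kpol). fst n = {#}"
      using assms that lookup_std_poly_nonzero(1) unfolding lyndon_expansion_def
      by (metis in_keys_iff prod.collapse)
  qed
  then show ?thesis using assms unfolding lyndon_expansion_def by (simp add: lookup_sum)
qed

lemma lyndon_expansion_greatest_word:
  fixes c :: "'x::linorder list \<Rightarrow> ('y, 'x, 'k::field) kpol"
  assumes exp: "lyndon_expansion Z c f"
    and m: "m \<in> Z" "\<forall>z\<in>Z. z \<noteq> m \<longrightarrow> deglex_gt m z"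
  shows "lookup f (\<beta>, m) = lookup (c m) (\<beta>, [])"
    and "n \<in> keys f \<Longrightarrow> snd n = m \<or> deglex_gt m (snd n)"
proof -
  have alsw: "alsw z" if "z \<in> Z" for z using exp that unfolding lyndon_expansion_def by blast
  let ?P = "std_poly :: 'x list \<Rightarrow> ('y, 'x, 'k) kpol"
  have "lookup (?P z) ({#}, m) = 0" if z: "z \<in> Z - {m}" for z
  proof (rule ccontr)
    assume "lookup (?P z) ({#}, m) \<noteq> 0"
    then have "m = z \<or> deglex_gt z m" using z by (intro lookup_std_poly_nonzero(2) alsw) auto
    then show False using z m(2) deglex_asym by blast
  qed
  moreover have "lookup (?P m) ({#}, m) = 1"
    using triangular_std_poly[OF alsw[OF m(1)]] unfolding triangular_def by blast
  moreover have "finite Z" using exp unfolding lyndon_expansion_def by blast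
  ultimately show "lookup f (\<beta>, m) = lookup (c m) (\<beta>, [])"
    unfolding lookup_lyndon_expansion[OF exp] using m(1) by (simp add: sum.remove)
  assume "n \<in> keys f"
  then have "(\<Sum>z\<in>Z. lookup (c z) (fst n, []) * lookup (?P z) ({#}, snd n)) \<noteq> 0"
    using lookup_lyndon_expansion[OF exp, of "fst n" "snd n"] by (simp add: in_keys_iff)
  then obtain z where z: "z \<in> Z" "lookup (c z) (fst n, []) * lookup (?P z) ({#}, snd n) \<noteq> 0"
    by (meson sum.neutral)
  then have "snd n = z \<or> deglex_gt z (snd n)" by (intro lookup_std_poly_nonzero(2) alsw) auto
  moreover have "z = m \<or> deglex_gt m z" using z(1) m(2) by blast
  ultimately show "snd n = m \<or> deglex_gt m (snd n)" using deglex_trans by blast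
qed

lemma lx_lyndon_expansion:
  assumes exp: "lyndon_expansion Z c f"
    and m: "m \<in> Z" "\<forall>z\<in>Z. z \<noteq> m \<longrightarrow> deglex_gt m z"
  shows "lx f = m"
proof -
  have cm: "c m \<in> kY" "c m \<noteq> 0" using exp m(1) unfolding lyndon_expansion_def by auto
  then have "keys (c m) \<noteq> {}" by simp
  then obtain k0 where "k0 \<in> keys (c m)" by blast
  moreover have "snd k0 = []" using calculation cm(1) by (simp add: kY_def)
  ultimately obtain \<beta>0 where "lookup (c m) (\<beta>0, []) \<noteq> 0" by (cases k0) (auto simp: in_keys_iff)
  then have key: "(\<beta>0, m) \<in> keys f"
    using lyndon_expansion_greatest_word(1)[OF exp m] by (simp add: in_keys_iff)
  then have "f \<noteq> 0" by auto
  note lead = lead_greatest[OF this]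
  have lead_f: "lead f = (ly f, lx f)" by (simp add: ly_def lx_def)
  have "lx f = m \<or> deglex_gt m (lx f)"
    using lyndon_expansion_greatest_word(2)[OF exp m lead(1)] lead_f by simp
  moreover have "lx f = m \<or> deglex_gt (lx f) m"
    using lead(2)[OF key] lead_f by (cases "(\<beta>0, m) = lead f") (auto simp: mon_gt_def)
  ultimately show ?thesis using deglex_asym by blast
qed

text \<open>A \<open>k\<close>-monic expansion with \<open>\<bar>f\<^sup>Y = 1\<close> has coefficient exactly \<open>1\<close> at its
  leading word: any other \<open>Y\<close>-monomial there would lie above the leading monomial.\<close>

lemma lyndon_expansion_kmonic:
  fixes c :: "'x::linorder list \<Rightarrow> ('y::linorder, 'x, 'k::field) kpol"
  assumes exp: "lyndon_expansion Z c f"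
    and m: "m \<in> Z" "\<forall>z\<in>Z. z \<noteq> m \<longrightarrow> deglex_gt m z"
    and f: "kmonic f" "ly f = {#}"
  shows "f = std_poly m + (\<Sum>z\<in>Z - {m}. wmult (c z) (std_poly z))"
proof -
  note coeff = lyndon_expansion_greatest_word(1)[OF exp m]
  have lx: "lx f = m" by (rule lx_lyndon_expansion[OF exp m])
  have lead_f: "lead f = ({#}, m)" using f(2) lx unfolding ly_def lx_def by (simp add: prod_eq_iff)
  have "f \<noteq> 0" using f(1) kmonic_def by blast
  note lead = lead_greatest[OF this]
  have cm: "c m = ymon {#} 1"
  proof (rule poly_mapping_eqI)
    fix k :: "'y multiset \<times> 'x list"
    obtain \<beta> w where k: "k = (\<beta>, w)" by (cases k)
    show "lookup (c m) k = lookup (ymon {#} 1) k"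
    proof (cases "w = []")
      case False
      have "c m \<in> kY" using exp m(1) unfolding lyndon_expansion_def by blast
      then have "k \<notin> keys (c m)" using False k unfolding kY_def by auto
      then show ?thesis using False k by (simp add: in_keys_iff ymon_def lookup_single)
    next
      case True
      have "lookup f (\<beta>, m) = 0" if "\<beta> \<noteq> {#}"
      proof (rule ccontr)
        assume "lookup f (\<beta>, m) \<noteq> 0"
        then have "mon_gt ({#}, m) (\<beta>, m)" using lead(2) lead_f that by (simp add: in_keys_iff)
        then show False using deglex_irrefl[of m] not_deglexY_gt_empty[of \<beta>] by (simp add: mon_gt_def)
      qed
      moreover have "lookup f ({#}, m) = 1" using f(1) lead_f by (simp add: kmonic_def)
      ultimately show ?thesis using True k coeff by (simp add: ymon_def lookup_single when_def)
    qed
  qed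
  have "f = (\<Sum>z\<in>Z. wmult (c z) (std_poly z))" using exp by (simp add: lyndon_expansion_def)
  also have "\<dots> = wmult (c m) (std_poly m) + (\<Sum>z\<in>Z - {m}. wmult (c z) (std_poly z))"
    using exp m(1) by (intro sum.remove) (simp_all add: lyndon_expansion_def)
  finally show ?thesis by (simp add: cm)
qed

lemma lookup_kY_var:
  assumes "r \<in> kY"
  shows "lookup (wmult r (var x)) (\<beta>, w) = (if w = [x] then lookup r (\<beta>, []) else 0)"
  using lookup_kY_wmult[OF assms, of "var x"] by (simp add: var_def lookup_single when_def)

lemma lx_kY_var:
  assumes "r \<in> kY" "r \<noteq> 0"
  shows "lx (wmult r (var x)) = [x]"
proof -
  have "keys r \<noteq> {}" using assms(2) by simp
  then obtain k where k: "k \<in> keys r" by blast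
  moreover have "snd k = []" using k assms(1) by (simp add: kY_def)
  ultimately have "lookup (wmult r (var x)) (fst k, [x]) \<noteq> 0"
    using lookup_kY_var[OF assms(1)] by (cases k) (simp add: in_keys_iff)
  then have "wmult r (var x) \<noteq> 0" by auto
  then have "lead (wmult r (var x)) \<in> keys (wmult r (var x))" by (rule lead_greatest)
  moreover obtain \<beta> w where lead: "lead (wmult r (var x)) = (\<beta>, w)" by fastforce
  ultimately have "lookup (wmult r (var x)) (\<beta>, w) \<noteq> 0" by (simp add: in_keys_iff)
  then have "w = [x]" by (simp add: lookup_kY_var[OF assms(1)] split: if_splits)
  then show ?thesis by (simp add: lx_def lead)
qed

text \<open>For a \<open>k\<close>-monic \<open>r x\<close> the leading coefficient of \<open>r\<close> is \<open>1\<close>, so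
  subtracting \<open>r\<close> from its leading monomial leaves only smaller monomials.\<close>

lemma kmonic_kY_var_tail:
  assumes r: "r \<in> kY" and g: "kmonic (wmult r (var x))"
  defines "\<gamma> \<equiv> ly (wmult r (var x))"
  shows "\<forall>k\<in>keys (ymon \<gamma> 1 - r). deglexY_gt \<gamma> (fst k)"
proof
  let ?g = "wmult r (var x)"
  have "?g \<noteq> 0" using g by (simp add: kmonic_def)
  note lead = lead_greatest[OF this]
  have "r \<noteq> 0" using \<open>?g \<noteq> 0\<close> by auto
  then have lead_g: "lead ?g = (\<gamma>, [x])"
    using lx_kY_var[OF r, of x] unfolding \<gamma>_def ly_def lx_def by (simp add: prod_eq_iff)
  have r1: "lookup r (\<gamma>, []) = 1" using g lead_g lookup_kY_var[OF r] by (simp add: kmonic_def)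
  fix k assume k: "k \<in> keys (ymon \<gamma> 1 - r)"
  obtain \<beta> w where k_eq: "k = (\<beta>, w)" by (cases k)
  have "w = []" using kY_diff[OF ymon_kY r, of \<gamma> 1] k k_eq unfolding kY_def by auto
  then have "lookup (ymon \<gamma> 1) k - lookup r k \<noteq> 0" using k by (simp add: in_keys_iff lookup_minus)
  then have "\<beta> \<noteq> \<gamma>" "lookup r (\<beta>, []) \<noteq> 0"
    using r1 k_eq \<open>w = []\<close> by (auto simp: ymon_def lookup_single when_def split: if_splits)
  then have "mon_gt (\<gamma>, [x]) (\<beta>, [x])"
    using lead(2)[of "(\<beta>, [x])"] lead_g lookup_kY_var[OF r] by (simp add: in_keys_iff)
  then show "deglexY_gt \<gamma> (fst k)" using k_eq deglex_irrefl[of "[x]"] by (simp add: mon_gt_def)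
qed

section \<open>Triviality modulo \<open>(S, w)\<close>\<close>

lemma trivial_mod_zero: "trivial_mod S w 0"
  unfolding trivial_mod_def by (rule exI[of _ "[]"]) simp

lemma trivial_mod_add:
  assumes "trivial_mod S w h1" "trivial_mod S w h2"
  shows "trivial_mod S w (h1 + h2)"
proof -
  obtain ts1 ts2 where
    "h1 = sum_list (map (\<lambda>(\<alpha>, \<beta>, a, s, b). wmult (ymon \<beta> \<alpha>) (nsw a s b)) ts1)"
    "\<forall>(\<alpha>, \<beta>, a, s, b)\<in>set ts1. s \<in> S \<and> alsw (a @ lx s @ b) \<and> mon_gt w (\<beta> + ly s, a @ lx s @ b)"
    "h2 = sum_list (map (\<lambda>(\<alpha>, \<beta>, a, s, b). wmult (ymon \<beta> \<alpha>) (nsw a s b)) ts2)"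
    "\<forall>(\<alpha>, \<beta>, a, s, b)\<in>set ts2. s \<in> S \<and> alsw (a @ lx s @ b) \<and> mon_gt w (\<beta> + ly s, a @ lx s @ b)"
    using assms unfolding trivial_mod_def by blast
  then show ?thesis unfolding trivial_mod_def by (intro exI[of _ "ts1 @ ts2"]) auto
qed

lemma trivial_mod_sum:
  "finite K \<Longrightarrow> (\<And>k. k \<in> K \<Longrightarrow> trivial_mod S w (F k)) \<Longrightarrow> trivial_mod S w (\<Sum>k\<in>K. F k)"
  by (induction K rule: finite_induct) (auto intro: trivial_mod_zero trivial_mod_add)

lemma trivial_mod_normal_word:
  assumes "s \<in> S" "alsw (a @ lx s @ b)" "mon_gt w (\<beta> + ly s, a @ lx s @ b)"
  shows "trivial_mod S w (wmult (ymon \<beta> \<alpha>) (nsw a s b))"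
  unfolding trivial_mod_def by (rule exI[of _ "[(\<alpha>, \<beta>, a, s, b)]"]) (use assms in simp)

lemma trivial_mod_kY_mult_lower:
  assumes f: "f \<in> S" "ly f = {#}" "alsw (lx f)"
    and q: "q \<in> kY" "\<forall>k\<in>keys q. deglexY_gt \<gamma> (fst k)"
  shows "trivial_mod S (\<gamma>, lx f) (wmult q f)"
proof -
  have "wmult q f = (\<Sum>k\<in>keys q. wmult (ymon (fst k) (lookup q k)) (nsw [] f []))"
    by (subst kY_eq_sum_ymon[OF q(1)]) (simp add: wmult_sum_left nsw_Nil_Nil)
  also have "trivial_mod S (\<gamma>, lx f) \<dots>"
    using f q(2) by (intro trivial_mod_sum trivial_mod_normal_word) (auto simp: mon_gt_def)
  finally show ?thesis .
qed

text \<open>Each \<open>r [z]\<close> with \<open>z = x z'\<close> is the normal \<open>rx\<close>-word \<open>[(rx) z']\<close>.\<close>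

lemma trivial_mod_kY_var_lower:
  assumes S: "\<And>x'. wmult r (var x') \<in> S" and r: "r \<in> kY" "r \<noteq> 0"
    and Z: "finite Z" "\<forall>z\<in>Z. alsw z \<and> deglex_gt m z \<and> c z \<in> kY"
  shows "trivial_mod S (\<gamma>, m) (wmult r (\<Sum>z\<in>Z. wmult (c z) (std_poly z)))"
proof -
  have "wmult r (\<Sum>z\<in>Z. wmult (c z) (std_poly z))
      = (\<Sum>z\<in>Z. \<Sum>k\<in>keys (c z). wmult (ymon (fst k) (lookup (c z) k)) (wmult r (std_poly z)))"
  proof (simp only: wmult_sum_right, rule sum.cong[OF refl])
    fix z assume "z \<in> Z"
    then have "c z \<in> kY" using Z(2) by blast
    then have "wmult r (wmult (c z) (std_poly z)) = wmult (c z) (wmult r (std_poly z))"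
      by (metis kY_commute wmult_assoc)
    also have "\<dots> = (\<Sum>k\<in>keys (c z). wmult (ymon (fst k) (lookup (c z) k)) (wmult r (std_poly z)))"
      by (subst kY_eq_sum_ymon[OF \<open>c z \<in> kY\<close>]) (simp add: wmult_sum_left)
    finally show "wmult r (wmult (c z) (std_poly z)) = \<dots>" .
  qed
  also have "trivial_mod S (\<gamma>, m) \<dots>"
  proof (intro trivial_mod_sum)
    fix z k assume z: "z \<in> Z"
    then have "z \<noteq> []" "alsw z" "deglex_gt m z" using Z(2) alsw_def by auto
    then have z_eq: "[] @ [hd z] @ tl z = z" by simp
    let ?s = "wmult r (var (hd z))"
    have lx_s: "lx ?s = [hd z]" by (rule lx_kY_var[OF r])
    have "wmult r (std_poly z) = nsw [] ?s (tl z)"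
      using nsw_kY_var[OF r(1) lx_s, of "[]" "tl z"] z_eq by simp
    moreover have "trivial_mod S (\<gamma>, m) (wmult (ymon (fst k) (lookup (c z) k)) (nsw [] ?s (tl z)))"
      using S \<open>alsw z\<close> \<open>deglex_gt m z\<close>
      by (intro trivial_mod_normal_word) (simp_all add: lx_s hd_Cons_tl[OF \<open>z \<noteq> []\<close>] mon_gt_def)
    ultimately show "trivial_mod S (\<gamma>, m) (wmult (ymon (fst k) (lookup (c z) k)) (wmult r (std_poly z)))"
      by simp
  qed (use Z(1) in simp_all)
  finally show ?thesis .
qed

lemma incl_comp_split:
  assumes "ly f = {#}" and "f = p + F" and "nsw a g b = wmult r p"
  shows "incl_comp f g a b = wmult (ymon (ly g) 1 - r) f + wmult r F"
proof -
  have "incl_comp f g a b = wmult (ymon (ly g) 1) f - wmult r p"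
    unfolding incl_comp_def Let_def assms(1,3) by simp
  also have "\<dots> = wmult (ymon (ly g) 1 - r) f + wmult r F"
    unfolding wmult_diff_left by (simp add: assms(2) wmult_add_right algebra_simps)
  finally show ?thesis .
qed

lemma trivial_mod_split_composition:
  assumes S: "f \<in> S" "\<And>x'. wmult r (var x') \<in> S"
    and r: "r \<in> kY" "kmonic (wmult r (var x))"
    and f: "ly f = {#}" "alsw (lx f)"
    and Z: "finite Z" "\<forall>z\<in>Z. alsw z \<and> deglex_gt (lx f) z \<and> c z \<in> kY"
  defines "\<gamma> \<equiv> ly (wmult r (var x))"
  shows "trivial_mod S (\<gamma>, lx f) (wmult (ymon \<gamma> 1 - r) f + wmult r (\<Sum>z\<in>Z. wmult (c z) (std_poly z)))"
proof (rule trivial_mod_add)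
  show "trivial_mod S (\<gamma>, lx f) (wmult (ymon \<gamma> 1 - r) f)"
  proof (rule trivial_mod_kY_mult_lower[OF S(1) f])
    show "ymon \<gamma> 1 - r \<in> kY" by (rule kY_diff[OF ymon_kY r(1)])
    show "\<forall>k\<in>keys (ymon \<gamma> 1 - r). deglexY_gt \<gamma> (fst k)"
      unfolding \<gamma>_def by (rule kmonic_kY_var_tail[OF r])
  qed
  have "r \<noteq> 0" using r(2) by (auto simp: kmonic_def)
  then show "trivial_mod S (\<gamma>, lx f) (wmult r (\<Sum>z\<in>Z. wmult (c z) (std_poly z)))"
    by (rule trivial_mod_kY_var_lower[OF S(2) r(1) _ Z])
qed

theorem lemma4p4:
  fixes f g r :: "('y::wellorder, 'x::wellorder, 'k::field) kpol"
    and x :: 'x and a b :: "'x list"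
  assumes "f \<in> lie_alg" and "g \<in> lie_alg"
    and "kmonic f" and "kmonic g"
    and "ly f = {#}"
    and "r \<in> kY" and "g = wmult r (var x)"
    and "lx f = a @ lx g @ b"
  shows "trivial_mod ({f} \<union> {wmult r (var x') | x'. True}) (incl_w f g) (incl_comp f g a b)"
proof -
  obtain Z c where exp: "lyndon_expansion Z c f" using lie_alg_lyndon_expansion[OF assms(1)] by blast
  then have Z: "finite Z" "Z \<noteq> {}" using assms(3) by (auto simp: lyndon_expansion_def kmonic_def)
  then obtain m where m: "m \<in> Z" "\<forall>z\<in>Z. z \<noteq> m \<longrightarrow> deglex_gt m z"
    using finite_deglex_greatest by blast
  note lx_f = lx_lyndon_expansion[OF exp m] and f_eq = lyndon_expansion_kmonic[OF exp m assms(3,5)]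
  have "r \<noteq> 0" using assms(4,7) by (auto simp: kmonic_def)
  note lx_g = lx_kY_var[OF assms(6) this, of x]
  have "nsw a g b = wmult r (std_poly m)"
    using nsw_kY_var[OF assms(6) lx_g] assms(7,8) lx_f lx_g by simp
  then have "incl_comp f g a b = wmult (ymon (ly g) 1 - r) f
      + wmult r (\<Sum>z\<in>Z - {m}. wmult (c z) (std_poly z))"
    by (rule incl_comp_split[OF assms(5) f_eq])
  moreover have "trivial_mod ({f} \<union> {wmult r (var x') | x'. True}) (ly g, lx f) \<dots>"
    unfolding assms(7) using exp m Z(1) assms(3,4,5,6)[unfolded assms(7)] lx_f
    by (intro trivial_mod_split_composition) (auto simp: lyndon_expansion_def)
  ultimately show ?thesis by (simp add: incl_w_def assms(5))
qed

end
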